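(* For every integer $t\geq3$ there exists $C(t)\in(0,\infty)$ such that the following holds. Let $A_1,\dots,A_k\in\Pi_n^{(t)}$, let $\epsilon_1,\dots,\epsilon_k$ be independent uniformly distributed $\{-1,1\}$-valued random variables, and let $\mathbf d=(d_1,\dots,d_t)\in[n]^t$, $\min(\mathbf d)=\min\{d_1,\dots,d_t\}$, $\max(\mathbf d)=\max\{d_1,\dots,d_t\}$. Then $$\mathbb{E}\Big[\max\Big\{\sum_{i=1}^k\epsilon_iA_i(\mathbf x): x[s]\in H^n_{d_s},\ s\in[t]\Big\}\Big]\leq C(t)\sqrt{k\max(\mathbf d)\log n}\,\min(\mathbf d)^{1-\frac1{2t}}.$$
   Context: $H^n_d=\{x\in\{-1,0,1\}^n:\ x\text{ has exactly }\min\{d,n\}\text{ nonzero entries}\}$; $A(\mathbf x)=A(x[1],\dots,x[t])$. A $t$-linear form $A$ on $\mathbb{R}^n$ is plane sub-stochastic if $A(e_{s_1},\dots,e_{s_t})\geq0$ on standard basis vectors and $A(\mathbf 1,\dots,\mathbf 1,e_s,\mathbf 1,\dots,\mathbf 1)\leq1$ for every $s\in[n]$ and every position of $e_s$; $\Pi_n^{(t)}$ is the set of $t$-linear forms $A$ such that the form $|A|$ with $|A|(e_{s_1},\dots,e_{s_t})=|A(e_{s_1},\dots,e_{s_t})|$ is plane sub-stochastic. *)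

theory Defs
  imports "HOL-Analysis.Analysis"
begin

(* Index conventions: [n] is rendered as {..<n}; a vector in R^n is a function
   nat => real (only entries < n matter); a t-tuple of indices / vectors is a
   function on {..<t}. *)

definition idx_tuples :: "nat \<Rightarrow> nat \<Rightarrow> (nat \<Rightarrow> nat) set" where
  "idx_tuples n t = Pi\<^sub>E {..<t} (\<lambda>_. {..<n})"

(* A t-linear form on R^n is given by its coefficient tensor
   a(s) = A(e_{s_1},...,e_{s_t}); its value on x[1],...,x[t] is the multilinear
   expansion. *)
definition form_eval :: "nat \<Rightarrow> nat \<Rightarrow> ((nat \<Rightarrow> nat) \<Rightarrow> real) \<Rightarrow> (nat \<Rightarrow> nat \<Rightarrow> real) \<Rightarrow> real" where
  "form_eval n t a X = (\<Sum>s\<in>idx_tuples n t. a s * (\<Prod>j<t. X j (s j)))"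

definition plane_substochastic :: "nat \<Rightarrow> nat \<Rightarrow> ((nat \<Rightarrow> nat) \<Rightarrow> real) \<Rightarrow> bool" where
  "plane_substochastic n t b \<longleftrightarrow>
     (\<forall>s\<in>idx_tuples n t. b s \<ge> 0) \<and>
     (\<forall>j<t. \<forall>s<n. form_eval n t b (\<lambda>i. if i = j then (\<lambda>m. if m = s then 1 else 0) else (\<lambda>_. 1)) \<le> 1)"

definition Pi_forms :: "nat \<Rightarrow> nat \<Rightarrow> ((nat \<Rightarrow> nat) \<Rightarrow> real) set" where
  "Pi_forms n t = {a. plane_substochastic n t (\<lambda>s. \<bar>a s\<bar>)}"

definition H :: "nat \<Rightarrow> nat \<Rightarrow> (nat \<Rightarrow> real) set" where
  "H n d = {x \<in> Pi\<^sub>E {..<n} (\<lambda>_. {-1, 0, 1}). card {i\<in>{..<n}. x i \<noteq> 0} = min d n}"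

definition H_tuples :: "nat \<Rightarrow> nat \<Rightarrow> (nat \<Rightarrow> nat) \<Rightarrow> (nat \<Rightarrow> nat \<Rightarrow> real) set" where
  "H_tuples n t d = Pi\<^sub>E {..<t} (\<lambda>s. H n (d s))"

definition exp_max :: "nat \<Rightarrow> nat \<Rightarrow> nat \<Rightarrow> (nat \<Rightarrow> (nat \<Rightarrow> nat) \<Rightarrow> real) \<Rightarrow> (nat \<Rightarrow> nat) \<Rightarrow> real" where
  "exp_max n t k A d =
     (\<Sum>\<epsilon>\<in>Pi\<^sub>E {..<k} (\<lambda>_. {-1::real, 1}).
        Max ((\<lambda>X. \<Sum>i<k. \<epsilon> i * form_eval n t (A i) X) ` H_tuples n t d)) / 2 ^ k"

end

(*
  Chaining with random sparsification. Keeping each coordinate of each vector X[s] independently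
  with probability 2^-l, and multiplying the kept ones by 2^l, changes every A_i(X) by a random
  amount of variance at most (2^l)^t t min(d): plane sub-stochasticity enters through the bound 1
  on the mass of every slice of |A_i|. By averaging, one mask serves all k forms at once and
  shrinks every support to about max(d) 2^-l, so the level-l approximations of all X range over a
  set of logarithmic size O(t^2 max(d) 2^-l log n). Massart's finite class lemma bounds the
  Rademacher average of the l-th chaining increment by a constant times
  sqrt(k min(d) max(d) log n) 2^(l(t-1)/2). For t >= 3 these grow at least geometrically, and
  stopping the chain at the level L with 2^(Lt) ~ min(d), where the trivial bound
  |A_i(X)| <= min(d) takes over, gives the exponent 1 - 1/(2t).
*)

theory Submission
  imports Defs "HOL-Probability.Hoeffding"
begin

section \<open>Rademacher averages of finite sets\<close>

lemma exp_plus_exp_minus_le: "exp x + exp (-x) \<le> 2 * exp (x\<^sup>2 / 2)" for x :: real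
proof -
  have "exp y + exp (-y) \<le> 2 * exp (y\<^sup>2 / 2)" if "y \<ge> 0" for y :: real
  proof -
    have "ln (1 + (1/2) * (exp (2*y) - 1)) \<le> y + y\<^sup>2 / 2"
      using Hoeffdings_lemma_aux[of "2*y" "1/2"] that by (simp add: power2_eq_square)
    then have "1 + (1/2) * (exp (2*y) - 1) \<le> exp (y + y\<^sup>2 / 2)"
      by (smt (verit) exp_gt_zero exp_le_cancel_iff exp_ln)
    then have "exp (-y) * (1 + exp (2*y)) \<le> exp (-y) * (2 * exp (y + y\<^sup>2 / 2))"
      by (intro mult_left_mono) (auto simp: field_simps)
    moreover have "exp (-y) * (1 + exp (2*y)) = exp y + exp (-y)"
      by (simp add: algebra_simps flip: exp_add)
    moreover have "exp (-y) * (2 * exp (y + y\<^sup>2 / 2)) = 2 * exp (y\<^sup>2 / 2)"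
      by (simp flip: exp_add)
    ultimately show ?thesis by simp
  qed
  from this[of x] this[of "-x"] show ?thesis by (cases "x \<ge> 0") auto
qed

definition sign_vectors :: "nat \<Rightarrow> (nat \<Rightarrow> real) set" where
  "sign_vectors k = Pi\<^sub>E {..<k} (\<lambda>_. {-1, 1})"

lemma card_sign_vectors: "card (sign_vectors k) = 2 ^ k"
  unfolding sign_vectors_def by (simp add: card_PiE numeral_2_eq_2)

definition rademacher_avg :: "nat \<Rightarrow> (nat \<Rightarrow> real) set \<Rightarrow> real" where
  "rademacher_avg k V = (\<Sum>\<epsilon>\<in>sign_vectors k. Max ((\<lambda>v. \<Sum>i<k. \<epsilon> i * v i) ` V)) / 2 ^ k"

lemma sum_exp_sign_vectors_le:
  "(\<Sum>\<epsilon>\<in>sign_vectors k. exp (\<Sum>i<k. \<epsilon> i * v i)) \<le> 2 ^ k * exp ((\<Sum>i<k. (v i)\<^sup>2) / 2)"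
proof -
  have "(\<Sum>\<epsilon>\<in>sign_vectors k. exp (\<Sum>i<k. \<epsilon> i * v i))
      = (\<Sum>\<epsilon>\<in>sign_vectors k. \<Prod>i<k. exp (\<epsilon> i * v i))"
    by (simp add: exp_sum)
  also have "\<dots> = (\<Prod>i<k. \<Sum>e\<in>{-1::real, 1}. exp (e * v i))"
    unfolding sign_vectors_def by (subst prod_sum_PiE) auto
  also have "\<dots> = (\<Prod>i<k. exp (v i) + exp (- v i))"
    by (intro prod.cong) auto
  also have "\<dots> \<le> (\<Prod>i<k. 2 * exp ((v i)\<^sup>2 / 2))"
    by (intro prod_mono) (auto intro: add_nonneg_nonneg exp_plus_exp_minus_le)
  also have "\<dots> = 2 ^ k * exp ((\<Sum>i<k. (v i)\<^sup>2) / 2)"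
    by (simp add: prod.distrib exp_sum sum_divide_distrib)
  finally show ?thesis .
qed

lemma exp_mean_le_mean_exp:
  fixes g :: "'a \<Rightarrow> real"
  assumes "finite S" "S \<noteq> {}"
  shows "card S * exp ((\<Sum>x\<in>S. g x) / card S) \<le> (\<Sum>x\<in>S. exp (g x))"
proof -
  define a where "a = (\<Sum>x\<in>S. g x) / card S"
  have "exp a * (1 + (g x - a)) \<le> exp (g x)" for x
    using mult_left_mono[OF exp_ge_add_one_self[of "g x - a"], of "exp a"] by (simp flip: exp_add)
  then have "(\<Sum>x\<in>S. exp a * (1 + (g x - a))) \<le> (\<Sum>x\<in>S. exp (g x))" by (rule sum_mono)
  moreover have "(\<Sum>x\<in>S. exp a * (1 + (g x - a))) = card S * exp a"
    using assms by (simp add: a_def sum_distrib_left[symmetric] sum.distrib sum_subtractf)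
  ultimately show ?thesis by (simp add: a_def)
qed

lemma rademacher_avg_le_ln_card:
  fixes V :: "(nat \<Rightarrow> real) set"
  assumes fin: "finite V" and ne: "V \<noteq> {}" and R: "\<And>v. v \<in> V \<Longrightarrow> (\<Sum>i<k. (v i)\<^sup>2) \<le> R\<^sup>2"
    and lam: "lam > 0"
  shows "rademacher_avg k V \<le> ln (card V) / lam + lam * R\<^sup>2 / 2"
proof -
  define g where "g \<epsilon> = Max ((\<lambda>v. \<Sum>i<k. \<epsilon> i * v i) ` V)" for \<epsilon>
  define a where "a = rademacher_avg k V"
  have "finite (sign_vectors k)" "sign_vectors k \<noteq> {}"
    using card_gt_0_iff[of "sign_vectors k"] by (auto simp: card_sign_vectors)
  from exp_mean_le_mean_exp[OF this, of "\<lambda>\<epsilon>. lam * g \<epsilon>"]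
  have "2 ^ k * exp (lam * a) \<le> (\<Sum>\<epsilon>\<in>sign_vectors k. exp (lam * g \<epsilon>))"
    by (simp add: a_def rademacher_avg_def g_def card_sign_vectors sum_distrib_left[symmetric])
  also have "\<dots> \<le> (\<Sum>\<epsilon>\<in>sign_vectors k. \<Sum>v\<in>V. exp (\<Sum>i<k. \<epsilon> i * (lam * v i)))"
  proof (intro sum_mono)
    fix \<epsilon>
    have "g \<epsilon> \<in> (\<lambda>v. \<Sum>i<k. \<epsilon> i * v i) ` V"
      unfolding g_def using fin ne by (intro Max_in) auto
    then obtain v0 where v0: "v0 \<in> V" "g \<epsilon> = (\<Sum>i<k. \<epsilon> i * v0 i)" by auto
    have "exp (lam * g \<epsilon>) = exp (\<Sum>i<k. \<epsilon> i * (lam * v0 i))"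
      by (simp add: v0 sum_distrib_left algebra_simps)
    also have "\<dots> \<le> (\<Sum>v\<in>V. exp (\<Sum>i<k. \<epsilon> i * (lam * v i)))"
      using v0(1) fin by (intro member_le_sum) auto
    finally show "exp (lam * g \<epsilon>) \<le> (\<Sum>v\<in>V. exp (\<Sum>i<k. \<epsilon> i * (lam * v i)))" .
  qed
  also have "\<dots> = (\<Sum>v\<in>V. \<Sum>\<epsilon>\<in>sign_vectors k. exp (\<Sum>i<k. \<epsilon> i * (lam * v i)))"
    by (rule sum.swap)
  also have "\<dots> \<le> (\<Sum>v\<in>V. 2 ^ k * exp (lam\<^sup>2 * R\<^sup>2 / 2))"
  proof (intro sum_mono order.trans[OF sum_exp_sign_vectors_le] mult_left_mono)
    fix v assume "v \<in> V"
    have "(\<Sum>i<k. (lam * v i)\<^sup>2) = lam\<^sup>2 * (\<Sum>i<k. (v i)\<^sup>2)"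
      by (simp add: power_mult_distrib sum_distrib_left)
    also have "\<dots> \<le> lam\<^sup>2 * R\<^sup>2" using R[OF \<open>v \<in> V\<close>] by (intro mult_left_mono) auto
    finally show "exp ((\<Sum>i<k. (lam * v i)\<^sup>2) / 2) \<le> exp (lam\<^sup>2 * R\<^sup>2 / 2)" by simp
  qed auto
  finally have "exp (lam * a) \<le> card V * exp (lam\<^sup>2 * R\<^sup>2 / 2)" by simp
  then have "lam * a \<le> ln (card V) + lam\<^sup>2 * R\<^sup>2 / 2"
    using fin ne by (subst (asm) ln_ge_iff[symmetric]) (auto simp: card_gt_0_iff ln_mult)
  then show ?thesis
    using lam by (simp add: a_def field_simps power2_eq_square)
qed

lemma le_sqrt_if_le_inverse_add:
  fixes a P Q :: real
  assumes "P \<ge> 0" "Q \<ge> 0" and le: "\<And>lam. lam > 0 \<Longrightarrow> a \<le> P / lam + lam * Q"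
  shows "a \<le> sqrt (4 * P * Q)"
proof (cases "P > 0 \<and> Q > 0")
  case True
  define p q where "p = sqrt P" and "q = sqrt Q"
  have pq: "p > 0" "q > 0" "P = p\<^sup>2" "Q = q\<^sup>2"
    using True by (simp_all add: p_def q_def)
  have "a \<le> P / (p / q) + (p / q) * Q"
    using pq by (intro le) simp
  also have "\<dots> = 2 * p * q"
    using pq by (simp add: field_simps power2_eq_square)
  also have "\<dots> = sqrt (4 * P * Q)"
    using pq by (simp add: real_sqrt_mult power2_eq_square)
  finally show ?thesis .
next
  case False
  have "a \<le> 0"
  proof (rule ccontr)
    assume "\<not> a \<le> 0"
    then have a: "a > 0" by simp
    have "a \<le> a / 2"
    proof (cases "P = 0")
      case True
      have "a \<le> P / (a / (2 * Q + 1)) + a / (2 * Q + 1) * Q"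
        using a assms by (intro le) (simp add: add_nonneg_pos)
      also have "\<dots> \<le> a / 2"
        using True a assms by (simp add: field_simps)
      finally show ?thesis .
    next
      case False
      then have "Q = 0" using \<open>\<not> (P > 0 \<and> Q > 0)\<close> assms by auto
      have "a \<le> P / ((2 * P + 1) / a) + (2 * P + 1) / a * Q"
        using a assms by (intro le) (simp add: add_nonneg_pos)
      also have "\<dots> \<le> a / 2"
        using \<open>Q = 0\<close> a assms by (simp add: field_simps)
      finally show ?thesis .
    qed
    with a show False by simp
  qed
  moreover have "0 \<le> sqrt (4 * P * Q)" using assms by simp
  ultimately show ?thesis by linarith
qed

lemma massart_finite_class:
  fixes V :: "(nat \<Rightarrow> real) set"
  assumes fin: "finite V" and ne: "V \<noteq> {}" and R: "\<And>v. v \<in> V \<Longrightarrow> (\<Sum>i<k. (v i)\<^sup>2) \<le> R\<^sup>2"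
    and "R \<ge> 0" and Lg: "ln (card V) \<le> Lg"
  shows "rademacher_avg k V \<le> R * sqrt (2 * Lg)"
proof -
  have "card V \<ge> 1" using fin ne by (simp add: Suc_le_eq card_gt_0_iff)
  then have "Lg \<ge> 0" using Lg ln_ge_zero[of "real (card V)"] by linarith
  have "rademacher_avg k V \<le> sqrt (4 * Lg * (R\<^sup>2 / 2))"
  proof (rule le_sqrt_if_le_inverse_add)
    fix lam :: real assume "lam > 0"
    have "rademacher_avg k V \<le> ln (card V) / lam + lam * R\<^sup>2 / 2"
      using rademacher_avg_le_ln_card[OF fin ne R \<open>lam > 0\<close>] by simp
    moreover have "ln (card V) / lam \<le> Lg / lam"
      using Lg \<open>lam > 0\<close> by (intro divide_right_mono) auto
    ultimately show "rademacher_avg k V \<le> Lg / lam + lam * (R\<^sup>2 / 2)" by simp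
  qed (use \<open>Lg \<ge> 0\<close> in auto)
  also have "4 * Lg * (R\<^sup>2 / 2) = R\<^sup>2 * (2 * Lg)" by (simp add: algebra_simps)
  also have "sqrt (R\<^sup>2 * (2 * Lg)) = R * sqrt (2 * Lg)"
    using \<open>R \<ge> 0\<close> by (simp only: real_sqrt_mult real_sqrt_abs abs_of_nonneg)
  finally show ?thesis .
qed

lemma rademacher_avg_sum_le:
  assumes "finite T" "T \<noteq> {}"
  shows "rademacher_avg k ((\<lambda>x i. (\<Sum>l<L. f l x i) + g x i) ` T)
    \<le> (\<Sum>l<L. rademacher_avg k (f l ` T)) + rademacher_avg k (g ` T)"
proof -
  let ?M = "\<lambda>\<epsilon> V. Max ((\<lambda>v. \<Sum>i<k. \<epsilon> i * v i) ` V)"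
  have "?M \<epsilon> ((\<lambda>x i. (\<Sum>l<L. f l x i) + g x i) ` T) \<le> (\<Sum>l<L. ?M \<epsilon> (f l ` T)) + ?M \<epsilon> (g ` T)"
    for \<epsilon> :: "nat \<Rightarrow> real"
  proof (rule Max.boundedI)
    fix w assume "w \<in> (\<lambda>v. \<Sum>i<k. \<epsilon> i * v i) ` (\<lambda>x i. (\<Sum>l<L. f l x i) + g x i) ` T"
    then obtain x where x: "x \<in> T" and w: "w = (\<Sum>i<k. \<epsilon> i * ((\<Sum>l<L. f l x i) + g x i))"
      by auto
    have "w = (\<Sum>l<L. \<Sum>i<k. \<epsilon> i * f l x i) + (\<Sum>i<k. \<epsilon> i * g x i)"
      by (simp add: w distrib_left sum.distrib sum_distrib_left sum.swap[of _ "{..<L}"])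
    also have "\<dots> \<le> (\<Sum>l<L. ?M \<epsilon> (f l ` T)) + ?M \<epsilon> (g ` T)"
      using x assms by (intro add_mono sum_mono Max_ge) auto
    finally show "w \<le> (\<Sum>l<L. ?M \<epsilon> (f l ` T)) + ?M \<epsilon> (g ` T)" .
  qed (use assms in auto)
  then have "rademacher_avg k ((\<lambda>x i. (\<Sum>l<L. f l x i) + g x i) ` T)
      \<le> (\<Sum>\<epsilon>\<in>sign_vectors k. (\<Sum>l<L. ?M \<epsilon> (f l ` T)) + ?M \<epsilon> (g ` T)) / 2 ^ k"
    unfolding rademacher_avg_def by (intro divide_right_mono sum_mono) auto
  also have "\<dots> = (\<Sum>l<L. rademacher_avg k (f l ` T)) + rademacher_avg k (g ` T)"
    unfolding rademacher_avg_def
    by (simp add: sum.distrib add_divide_distrib sum_divide_distrib sum.swap[of _ "sign_vectors k"])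
  finally show ?thesis .
qed

section \<open>Plane sub-stochastic forms on the sets H\<close>

lemma idx_tuples_memD: "s \<in> idx_tuples n t \<Longrightarrow> j < t \<Longrightarrow> s j < n"
  by (auto simp: idx_tuples_def PiE_iff)

lemma H_memD: "x \<in> H n d \<Longrightarrow> r < n \<Longrightarrow> x r \<in> {-1, 0, 1}"
  by (auto simp: H_def PiE_iff)

lemma H_tuples_memD: "X \<in> H_tuples n t d \<Longrightarrow> j < t \<Longrightarrow> X j \<in> H n (d j)"
  by (auto simp: H_tuples_def PiE_iff)

lemma finite_H_tuples: "finite (H_tuples n t d)"
proof -
  have "H n e \<subseteq> Pi\<^sub>E {..<n} (\<lambda>_. {-1, 0, 1})" for e by (auto simp: H_def)
  then have "finite (H n e)" for e by (rule finite_subset) (simp add: finite_PiE)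
  then show ?thesis by (simp add: H_tuples_def finite_PiE)
qed

lemma H_tuples_nonempty: "H_tuples n t d \<noteq> {}"
proof -
  define X where "X = (\<lambda>j\<in>{..<t}. \<lambda>r\<in>{..<n}. if r < d j then 1 else 0 :: real)"
  have "X j \<in> H n (d j)" if "j < t" for j
  proof -
    have "{i\<in>{..<n}. X j i \<noteq> 0} = {..<min (d j) n}" using that by (auto simp: X_def)
    then show ?thesis using that by (auto simp: H_def X_def PiE_def extensional_def)
  qed
  then have "X \<in> H_tuples n t d" by (auto simp: H_tuples_def X_def)
  then show ?thesis by auto
qed

lemma Pi_forms_slice_sum_le:
  assumes "a \<in> Pi_forms n t" "j < t" "u < n"
  shows "(\<Sum>s\<in>idx_tuples n t. \<bar>a s\<bar> * (if s j = u then 1 else 0)) \<le> 1"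
proof -
  define e where "e = (\<lambda>i. if i = j then (\<lambda>m. if m = u then 1 else 0) else (\<lambda>_. 1 :: real))"
  have "form_eval n t (\<lambda>s. \<bar>a s\<bar>) e \<le> 1"
    using assms unfolding Pi_forms_def plane_substochastic_def e_def by blast
  moreover have "(\<Prod>i<t. e i (s i)) = (if s j = u then 1 else 0)" for s
  proof -
    have "(\<Prod>i<t. e i (s i)) = (\<Prod>i<t. if i = j then (if s j = u then 1 else 0) else 1)"
      by (intro prod.cong) (auto simp: e_def)
    also have "\<dots> = (if s j = u then 1 else 0)" using assms(2) by simp
    finally show ?thesis .
  qed
  ultimately show ?thesis by (simp add: form_eval_def)
qed

lemma abs_prod_H_tuples_le_indicator:
  assumes X: "X \<in> H_tuples n t d" and s: "s \<in> idx_tuples n t" and p: "p < t"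
  shows "\<bar>\<Prod>j<t. X j (s j)\<bar> \<le> (if X p (s p) \<noteq> 0 then 1 else 0)"
proof (cases "X p (s p) = 0")
  case True
  then have "(\<Prod>j<t. X j (s j)) = 0" using p by (intro prod_zero) auto
  then show ?thesis using True by simp
next
  case False
  have "\<bar>\<Prod>j<t. X j (s j)\<bar> = (\<Prod>j<t. \<bar>X j (s j)\<bar>)" by (simp add: abs_prod)
  also have "\<dots> \<le> 1"
  proof (rule prod_le_1)
    fix j assume "j \<in> {..<t}"
    then have "X j (s j) \<in> {-1, 0, 1}"
      using H_memD[OF H_tuples_memD[OF X] idx_tuples_memD[OF s]] by auto
    then show "0 \<le> \<bar>X j (s j)\<bar> \<and> \<bar>X j (s j)\<bar> \<le> 1" by auto
  qed
  finally show ?thesis using False by simp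
qed

lemma abs_prod_H_tuples_le_one:
  assumes "X \<in> H_tuples n t d" "s \<in> idx_tuples n t" "t > 0"
  shows "\<bar>\<Prod>j<t. X j (s j)\<bar> \<le> 1"
  using abs_prod_H_tuples_le_indicator[OF assms] by (smt (verit))

text \<open>Only the coordinates in the support of X p contribute, and each of the at most d p
  slices through them has total mass at most 1.\<close>
lemma sum_abs_terms_le:
  assumes a: "a \<in> Pi_forms n t" and X: "X \<in> H_tuples n t d" and p: "p < t"
  shows "(\<Sum>s\<in>idx_tuples n t. \<bar>a s * (\<Prod>j<t. X j (s j))\<bar>) \<le> d p"
proof -
  define S where "S = {u\<in>{..<n}. X p u \<noteq> 0}"
  have "card S = min (d p) n" using H_tuples_memD[OF X p] by (simp add: S_def H_def)
  then have card_S: "card S \<le> d p" by simp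
  have "(\<Sum>s\<in>idx_tuples n t. \<bar>a s * (\<Prod>j<t. X j (s j))\<bar>)
      \<le> (\<Sum>s\<in>idx_tuples n t. \<bar>a s\<bar> * (if X p (s p) \<noteq> 0 then 1 else 0))"
    by (intro sum_mono) (simp add: abs_mult mult_left_mono abs_prod_H_tuples_le_indicator[OF X _ p])
  also have "\<dots> = (\<Sum>s\<in>idx_tuples n t. \<Sum>u\<in>S. \<bar>a s\<bar> * (if s p = u then 1 else 0))"
    by (intro sum.cong refl) (auto simp: S_def idx_tuples_memD[OF _ p] if_distrib cong: if_cong)
  also have "\<dots> = (\<Sum>u\<in>S. \<Sum>s\<in>idx_tuples n t. \<bar>a s\<bar> * (if s p = u then 1 else 0))"
    by (rule sum.swap)
  also have "\<dots> \<le> (\<Sum>u\<in>S. 1)"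
    by (intro sum_mono Pi_forms_slice_sum_le[OF a p]) (simp add: S_def)
  also have "\<dots> \<le> d p" using card_S by simp
  finally show ?thesis .
qed

lemma sum_abs_terms_le_Min:
  assumes "a \<in> Pi_forms n t" "X \<in> H_tuples n t d" "t > 0"
  shows "(\<Sum>s\<in>idx_tuples n t. \<bar>a s * (\<Prod>j<t. X j (s j))\<bar>) \<le> Min (d ` {..<t})"
proof -
  have "Min (d ` {..<t}) \<in> d ` {..<t}" using \<open>t > 0\<close> by (intro Min_in) auto
  then obtain p where "p < t" "Min (d ` {..<t}) = d p" by auto
  then show ?thesis using sum_abs_terms_le[OF assms(1,2)] by simp
qed

lemma abs_form_eval_le_Min:
  assumes "a \<in> Pi_forms n t" "X \<in> H_tuples n t d" "t > 0"
  shows "\<bar>form_eval n t a X\<bar> \<le> Min (d ` {..<t})"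
  unfolding form_eval_def using sum_abs[of _ "idx_tuples n t"] sum_abs_terms_le_Min[OF assms]
  by (rule order.trans)

section \<open>Random sparsification\<close>

text \<open>Random sparsification with keep-probability 1/M, written combinatorially: a mask
  g in masks n M keeps the coordinate r iff g r = 0, so under the uniform distribution on masks
  the coordinates are kept independently, and expectations become sums over all masks divided
  by their number M ^ n. A kept coordinate is multiplied by M, which makes mask_weight an
  unbiased estimator of 1.\<close>

definition masks :: "nat \<Rightarrow> nat \<Rightarrow> (nat \<Rightarrow> nat) set" where
  "masks n M = Pi\<^sub>E {..<n} (\<lambda>_. {..<M})"

definition mask_tuples :: "nat \<Rightarrow> nat \<Rightarrow> nat \<Rightarrow> (nat \<Rightarrow> nat \<Rightarrow> nat) set" where
  "mask_tuples n t M = Pi\<^sub>E {..<t} (\<lambda>_. masks n M)"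

definition kept :: "(nat \<Rightarrow> nat) \<Rightarrow> nat \<Rightarrow> real" where
  "kept g r = (if g r = 0 then 1 else 0)"

definition sparsify :: "nat \<Rightarrow> nat \<Rightarrow> nat \<Rightarrow> (nat \<Rightarrow> nat \<Rightarrow> real) \<Rightarrow> (nat \<Rightarrow> nat \<Rightarrow> nat) \<Rightarrow> nat \<Rightarrow> nat \<Rightarrow> real"
  where "sparsify n t M X h =
    (\<lambda>j. if j < t then (\<lambda>r. if r < n \<and> h j r = 0 then real M * X j r else 0) else (\<lambda>_. 0))"

definition mask_weight :: "nat \<Rightarrow> nat \<Rightarrow> (nat \<Rightarrow> nat \<Rightarrow> nat) \<Rightarrow> (nat \<Rightarrow> nat) \<Rightarrow> real" where
  "mask_weight t M h s = (\<Prod>j<t. real M * kept (h j) (s j))"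

definition pair_weight :: "nat \<Rightarrow> nat \<Rightarrow> (nat \<Rightarrow> nat) \<Rightarrow> (nat \<Rightarrow> nat) \<Rightarrow> real" where
  "pair_weight t M s s' = (\<Prod>j<t. if s j = s' j then real M else 1)"

lemma finite_masks: "finite (masks n M)"
  by (simp add: masks_def finite_PiE)

lemma finite_mask_tuples: "finite (mask_tuples n t M)"
  by (simp add: mask_tuples_def finite_PiE finite_masks)

lemma card_mask_tuples: "card (mask_tuples n t M) = (M ^ n) ^ t"
  by (simp add: mask_tuples_def masks_def card_PiE finite_masks)

lemma card_masks_vanishing_on:
  assumes "B \<subseteq> {..<n}" "M > 0"
  shows "card {g\<in>masks n M. \<forall>r\<in>B. g r = 0} = M ^ (n - card B)"
proof -
  have "card {g\<in>masks n M. \<forall>r\<in>B. g r = 0} = card (Pi\<^sub>E {..<n} (\<lambda>q. if q \<in> B then {0} else {..<M}))"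
    using assms by (intro arg_cong[where f=card]) (auto simp: masks_def PiE_iff extensional_def split: if_splits)
  also have "\<dots> = (\<Prod>q<n. if q \<in> B then 1 else M)"
    by (subst card_PiE) (auto intro!: prod.cong)
  also have "\<dots> = (\<Prod>q\<in>{..<n} - B. M)"
    by (simp add: prod.If_cases Diff_eq)
  also have "\<dots> = M ^ (n - card B)"
    using assms by (simp add: card_Diff_subset finite_subset)
  finally show ?thesis .
qed

lemma sum_indicator_eq_card:
  "finite A \<Longrightarrow> (\<Sum>x\<in>A. if P x then 1 else 0 :: real) = card {x\<in>A. P x}"
  by (simp add: sum.If_cases Int_def conj_commute)

lemma sum_kept:
  assumes "r < n" "M > 0"
  shows "real M * (\<Sum>g\<in>masks n M. kept g r) = real M ^ n"
proof -
  have "(\<Sum>g\<in>masks n M. kept g r) = card {g\<in>masks n M. \<forall>q\<in>{r}. g q = 0}"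
    unfolding kept_def by (simp add: sum_indicator_eq_card finite_masks)
  also have "\<dots> = M ^ (n - 1)" using card_masks_vanishing_on[of "{r}" n M] assms by simp
  finally show ?thesis using assms(1) by (cases n) auto
qed

lemma sum_kept_pair:
  assumes "r < n" "r' < n" "M > 0"
  shows "real M ^ 2 * (\<Sum>g\<in>masks n M. kept g r * kept g r')
    = real M ^ n * (if r = r' then real M else 1)"
proof (cases "r = r'")
  case True
  then have "(\<Sum>g\<in>masks n M. kept g r * kept g r') = (\<Sum>g\<in>masks n M. kept g r)"
    by (intro sum.cong) (auto simp: kept_def)
  then have "real M ^ 2 * (\<Sum>g\<in>masks n M. kept g r * kept g r')
      = real M * (real M * (\<Sum>g\<in>masks n M. kept g r))"
    by (simp add: power2_eq_square)
  also have "\<dots> = real M * real M ^ n" using sum_kept[OF assms(1,3)] by simp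
  finally show ?thesis using True by simp
next
  case False
  have "(\<Sum>g\<in>masks n M. kept g r * kept g r')
      = (\<Sum>g\<in>masks n M. if \<forall>q\<in>{r, r'}. g q = 0 then 1 else 0)"
    by (intro sum.cong) (auto simp: kept_def)
  also have "\<dots> = card {g\<in>masks n M. \<forall>q\<in>{r, r'}. g q = 0}"
    by (rule sum_indicator_eq_card[OF finite_masks])
  also have "\<dots> = M ^ (n - 2)"
    using card_masks_vanishing_on[of "{r, r'}" n M] assms False by (simp add: numeral_2_eq_2)
  finally have "real M ^ 2 * (\<Sum>g\<in>masks n M. kept g r * kept g r') = real M ^ 2 * real M ^ (n - 2)"
    by simp
  also have "\<dots> = real M ^ (2 + (n - 2))" by (simp only: power_add)
  also have "2 + (n - 2) = n" using assms False by linarith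
  finally show ?thesis using False by simp
qed

lemma sum_mask_tuples_prod:
  "(\<Sum>h\<in>mask_tuples n t M. \<Prod>j<t. f j (h j)) = (\<Prod>j<t. \<Sum>g\<in>masks n M. (f j g :: real))"
  unfolding mask_tuples_def by (subst prod_sum_PiE) (auto simp: finite_masks)

lemma sum_mask_weight:
  assumes "s \<in> idx_tuples n t" "M > 0"
  shows "(\<Sum>h\<in>mask_tuples n t M. mask_weight t M h s) = (real M ^ n) ^ t"
proof -
  have "(\<Sum>h\<in>mask_tuples n t M. mask_weight t M h s) = (\<Prod>j<t. \<Sum>g\<in>masks n M. real M * kept g (s j))"
    unfolding mask_weight_def by (rule sum_mask_tuples_prod)
  also have "\<dots> = (\<Prod>j<t. real M ^ n)"
    by (intro prod.cong refl)
      (simp add: sum_distrib_left[symmetric] sum_kept idx_tuples_memD[OF assms(1)] assms(2))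
  finally show ?thesis by simp
qed

lemma sum_mask_weight_pair:
  assumes "s \<in> idx_tuples n t" "s' \<in> idx_tuples n t" "M > 0"
  shows "(\<Sum>h\<in>mask_tuples n t M. mask_weight t M h s * mask_weight t M h s')
    = (real M ^ n) ^ t * pair_weight t M s s'"
proof -
  have "(\<Sum>h\<in>mask_tuples n t M. mask_weight t M h s * mask_weight t M h s')
      = (\<Sum>h\<in>mask_tuples n t M. \<Prod>j<t. real M ^ 2 * (kept (h j) (s j) * kept (h j) (s' j)))"
    unfolding mask_weight_def
    by (intro sum.cong refl) (simp add: prod.distrib[symmetric] power2_eq_square algebra_simps)
  also have "\<dots> = (\<Prod>j<t. \<Sum>g\<in>masks n M. real M ^ 2 * (kept g (s j) * kept g (s' j)))"
    by (rule sum_mask_tuples_prod)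
  also have "\<dots> = (\<Prod>j<t. real M ^ n * (if s j = s' j then real M else 1))"
    by (intro prod.cong refl) (simp add: sum_distrib_left[symmetric] sum_kept_pair
        idx_tuples_memD[OF assms(1)] idx_tuples_memD[OF assms(2)] assms(3))
  also have "\<dots> = (real M ^ n) ^ t * pair_weight t M s s'"
    by (simp add: pair_weight_def prod.distrib)
  finally show ?thesis .
qed

lemma pair_weight_bounds:
  assumes "M \<ge> 1"
  shows "0 \<le> pair_weight t M s s' - 1"
    and "pair_weight t M s s' - 1 \<le> real M ^ t * (\<Sum>j<t. if s j = s' j then 1 else 0)"
proof -
  show "0 \<le> pair_weight t M s s' - 1"
    unfolding pair_weight_def using assms by (simp add: prod_ge_1)
  show "pair_weight t M s s' - 1 \<le> real M ^ t * (\<Sum>j<t. if s j = s' j then 1 else 0)"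
  proof (cases "\<exists>j<t. s j = s' j")
    case True
    then obtain j where j: "j < t" "s j = s' j" by auto
    have "pair_weight t M s s' \<le> (\<Prod>j<t. real M)"
      unfolding pair_weight_def using assms by (intro prod_mono) auto
    moreover have "(1::real) \<le> (\<Sum>j<t. if s j = s' j then 1 else 0)"
      using j by (intro member_le_sum[where i=j, THEN order.trans[rotated]]) auto
    then have "real M ^ t \<le> real M ^ t * (\<Sum>j<t. if s j = s' j then 1 else 0)"
      using mult_left_mono[of 1 _ "real M ^ t"] by simp
    ultimately show ?thesis by simp
  next
    case False
    then have "pair_weight t M s s' = 1" unfolding pair_weight_def by (intro prod.neutral) auto
    then show ?thesis by (auto intro!: mult_nonneg_nonneg sum_nonneg)
  qed
qed

lemma form_eval_sparsify:
  "form_eval n t a (sparsify n t M X h)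
    = (\<Sum>s\<in>idx_tuples n t. a s * (\<Prod>j<t. X j (s j)) * mask_weight t M h s)"
  unfolding form_eval_def mask_weight_def
proof (intro sum.cong refl)
  fix s assume s: "s \<in> idx_tuples n t"
  have "(\<Prod>j<t. sparsify n t M X h j (s j)) = (\<Prod>j<t. X j (s j) * (real M * kept (h j) (s j)))"
    by (intro prod.cong refl) (auto simp: sparsify_def kept_def idx_tuples_memD[OF s])
  then show "a s * (\<Prod>j<t. sparsify n t M X h j (s j))
      = a s * (\<Prod>j<t. X j (s j)) * (\<Prod>j<t. real M * kept (h j) (s j))"
    by (simp add: prod.distrib)
qed

text \<open>The variance computation: the mask weights have mean 1 and covariances pair_weight - 1.\<close>
lemma sum_sq_mask_weight_error:
  assumes "M > 0"
  shows "(\<Sum>h\<in>mask_tuples n t M. (\<Sum>s\<in>idx_tuples n t. c s * (mask_weight t M h s - 1))\<^sup>2)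
    = (real M ^ n) ^ t
      * (\<Sum>s\<in>idx_tuples n t. \<Sum>s'\<in>idx_tuples n t. c s * c s' * (pair_weight t M s s' - 1))"
proof -
  let ?I = "idx_tuples n t" and ?HS = "mask_tuples n t M" and ?W = "mask_weight t M"
  have cov: "(\<Sum>h\<in>?HS. (?W h s - 1) * (?W h s' - 1)) = (real M ^ n) ^ t * (pair_weight t M s s' - 1)"
    if "s \<in> ?I" "s' \<in> ?I" for s s'
  proof -
    have "(\<Sum>h\<in>?HS. (?W h s - 1) * (?W h s' - 1))
        = (\<Sum>h\<in>?HS. ?W h s * ?W h s') - (\<Sum>h\<in>?HS. ?W h s) - (\<Sum>h\<in>?HS. ?W h s') + (\<Sum>h\<in>?HS. 1)"
      by (simp add: algebra_simps sum.distrib sum_subtractf)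
    also have "\<dots> = (real M ^ n) ^ t * pair_weight t M s s' - (real M ^ n) ^ t - (real M ^ n) ^ t
        + (real M ^ n) ^ t"
      using that assms by (simp add: sum_mask_weight_pair sum_mask_weight card_mask_tuples)
    finally show ?thesis by (simp add: algebra_simps)
  qed
  have "(\<Sum>h\<in>?HS. (\<Sum>s\<in>?I. c s * (?W h s - 1))\<^sup>2)
      = (\<Sum>h\<in>?HS. \<Sum>s\<in>?I. \<Sum>s'\<in>?I. c s * c s' * ((?W h s - 1) * (?W h s' - 1)))"
    by (simp add: power2_eq_square sum_product algebra_simps)
  also have "\<dots> = (\<Sum>s\<in>?I. \<Sum>s'\<in>?I. \<Sum>h\<in>?HS. c s * c s' * ((?W h s - 1) * (?W h s' - 1)))"
    by (subst sum.swap) (intro sum.cong refl sum.swap)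
  also have "\<dots> = (\<Sum>s\<in>?I. \<Sum>s'\<in>?I. (real M ^ n) ^ t * (c s * c s' * (pair_weight t M s s' - 1)))"
    by (intro sum.cong refl) (simp add: sum_distrib_left[symmetric] cov ac_simps)
  finally show ?thesis by (simp only: sum_distrib_left)
qed

lemma sum_pair_weight_le:
  fixes c :: "(nat \<Rightarrow> nat) \<Rightarrow> real"
  assumes "M \<ge> 1"
    and slice: "\<And>j u. j < t \<Longrightarrow> u < n \<Longrightarrow>
      (\<Sum>s\<in>idx_tuples n t. \<bar>c s\<bar> * (if s j = u then 1 else 0)) \<le> 1"
  shows "(\<Sum>s\<in>idx_tuples n t. \<Sum>s'\<in>idx_tuples n t. c s * c s' * (pair_weight t M s s' - 1))
    \<le> real M ^ t * real t * (\<Sum>s\<in>idx_tuples n t. \<bar>c s\<bar>)"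
proof -
  let ?I = "idx_tuples n t"
  let ?P = "\<lambda>s s'. \<Sum>j<t. \<bar>c s\<bar> * (\<bar>c s'\<bar> * (if s' j = s j then 1 else 0))"
  have "c s * c s' * (pair_weight t M s s' - 1) \<le> real M ^ t * ?P s s'" for s s'
  proof -
    have "c s * c s' * (pair_weight t M s s' - 1) \<le> \<bar>c s\<bar> * \<bar>c s'\<bar> * (pair_weight t M s s' - 1)"
      using pair_weight_bounds(1)[OF assms(1)] by (intro mult_right_mono) (auto simp flip: abs_mult)
    also have "\<dots> \<le> \<bar>c s\<bar> * \<bar>c s'\<bar> * (real M ^ t * (\<Sum>j<t. if s j = s' j then 1 else 0))"
      using pair_weight_bounds(2)[OF assms(1)] by (intro mult_left_mono) auto
    finally show ?thesis
      by (simp add: sum_distrib_left eq_commute[of "s j" "s' j" for j] algebra_simps)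
  qed
  then have "(\<Sum>s\<in>?I. \<Sum>s'\<in>?I. c s * c s' * (pair_weight t M s s' - 1))
      \<le> (\<Sum>s\<in>?I. \<Sum>s'\<in>?I. real M ^ t * ?P s s')"
    by (intro sum_mono)
  also have "\<dots> = real M ^ t * (\<Sum>s\<in>?I. \<Sum>s'\<in>?I. ?P s s')"
    by (simp only: sum_distrib_left)
  also have "(\<Sum>s\<in>?I. \<Sum>s'\<in>?I. ?P s s')
      = (\<Sum>s\<in>?I. \<Sum>j<t. \<bar>c s\<bar> * (\<Sum>s'\<in>?I. \<bar>c s'\<bar> * (if s' j = s j then 1 else 0)))"
    by (intro sum.cong refl) (simp add: sum.swap[of _ ?I] sum_distrib_left)
  also have "\<dots> \<le> (\<Sum>s\<in>?I. \<Sum>j<t. \<bar>c s\<bar> * 1)"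
  proof (intro sum_mono mult_left_mono)
    fix s j assume "s \<in> ?I" "j \<in> {..<t}"
    then show "(\<Sum>s'\<in>?I. \<bar>c s'\<bar> * (if s' j = s j then 1 else 0)) \<le> 1"
      using slice[of j "s j"] idx_tuples_memD[of s n t j] by simp
  qed simp
  also have "\<dots> = real t * (\<Sum>s\<in>?I. \<bar>c s\<bar>)"
    by (simp add: sum_distrib_left mult.commute)
  finally show ?thesis by (simp add: mult.assoc mult_left_mono)
qed

lemma sparsify_second_moment_le:
  assumes a: "a \<in> Pi_forms n t" and X: "X \<in> H_tuples n t d" and "M \<ge> 1" "t > 0"
  shows "(\<Sum>h\<in>mask_tuples n t M. (form_eval n t a (sparsify n t M X h) - form_eval n t a X)\<^sup>2)
    \<le> (real M ^ n) ^ t * (real M ^ t * real t * Min (d ` {..<t}))"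
proof -
  define c where "c s = a s * (\<Prod>j<t. X j (s j))" for s
  have "form_eval n t a (sparsify n t M X h) = (\<Sum>s\<in>idx_tuples n t. c s * mask_weight t M h s)" for h
    by (simp add: form_eval_sparsify c_def)
  moreover have "form_eval n t a X = (\<Sum>s\<in>idx_tuples n t. c s)"
    by (simp add: form_eval_def c_def)
  ultimately have diff: "form_eval n t a (sparsify n t M X h) - form_eval n t a X
      = (\<Sum>s\<in>idx_tuples n t. c s * (mask_weight t M h s - 1))" for h
    by (simp add: sum_subtractf[symmetric] algebra_simps)
  have slice: "(\<Sum>s\<in>idx_tuples n t. \<bar>c s\<bar> * (if s j = u then 1 else 0)) \<le> 1"
    if "j < t" "u < n" for j u
  proof -
    have "\<bar>c s\<bar> \<le> \<bar>a s\<bar>" if "s \<in> idx_tuples n t" for s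
      using abs_prod_H_tuples_le_one[OF X that \<open>t > 0\<close>]
      by (simp add: c_def abs_mult mult_left_le)
    then have "(\<Sum>s\<in>idx_tuples n t. \<bar>c s\<bar> * (if s j = u then 1 else 0))
        \<le> (\<Sum>s\<in>idx_tuples n t. \<bar>a s\<bar> * (if s j = u then 1 else 0))"
      by (intro sum_mono) simp
    also have "\<dots> \<le> 1" by (rule Pi_forms_slice_sum_le[OF a that])
    finally show ?thesis .
  qed
  have "(\<Sum>s\<in>idx_tuples n t. \<bar>c s\<bar>) \<le> Min (d ` {..<t})"
    using sum_abs_terms_le_Min[OF a X \<open>t > 0\<close>] by (simp add: c_def)
  then have "real M ^ t * real t * (\<Sum>s\<in>idx_tuples n t. \<bar>c s\<bar>) \<le> real M ^ t * real t * Min (d ` {..<t})"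
    by (simp add: mult_left_mono)
  with sum_pair_weight_le[OF \<open>M \<ge> 1\<close> slice]
  have "(\<Sum>s\<in>idx_tuples n t. \<Sum>s'\<in>idx_tuples n t. c s * c s' * (pair_weight t M s s' - 1))
      \<le> real M ^ t * real t * Min (d ` {..<t})"
    by (rule order.trans)
  then show ?thesis
    using \<open>M \<ge> 1\<close> by (simp add: diff sum_sq_mask_weight_error mult_left_mono)
qed

lemma card_support_sparsify:
  assumes "j < t" "M > 0"
  shows "real (card {r. sparsify n t M X h j r \<noteq> 0}) = (\<Sum>r\<in>{u\<in>{..<n}. X j u \<noteq> 0}. kept (h j) r)"
proof -
  have "{r. sparsify n t M X h j r \<noteq> 0} = {r\<in>{u\<in>{..<n}. X j u \<noteq> 0}. h j r = 0}"
    using assms by (auto simp: sparsify_def)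
  then show ?thesis unfolding kept_def by (simp add: sum_indicator_eq_card)
qed

lemma sum_mask_tuples_kept:
  assumes "j < t" "r < n" "M > 0"
  shows "real M * (\<Sum>h\<in>mask_tuples n t M. kept (h j) r) = (real M ^ n) ^ t"
proof -
  have "(\<Sum>h\<in>mask_tuples n t M. kept (h j) r)
      = (\<Sum>h\<in>mask_tuples n t M. \<Prod>j'<t. if j' = j then kept (h j') r else 1)"
    using assms(1) by (intro sum.cong refl) simp
  also have "\<dots> = (\<Prod>j'<t. \<Sum>g\<in>masks n M. if j' = j then kept g r else 1)"
    by (rule sum_mask_tuples_prod)
  also have "\<dots> = (\<Prod>j'<t. if j' = j then (\<Sum>g\<in>masks n M. kept g r) else real M ^ n)"
    by (intro prod.cong refl) (auto simp: masks_def card_PiE)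
  also have "\<dots> = (\<Sum>g\<in>masks n M. kept g r) * (\<Prod>j'\<in>{..<t} - {j}. real M ^ n)"
    using assms(1) by (subst prod.remove[of _ j]) (auto intro!: prod.cong)
  also have "\<dots> = (\<Sum>g\<in>masks n M. kept g r) * (real M ^ n) ^ (t - 1)"
    using assms(1) by simp
  finally have "real M * (\<Sum>h\<in>mask_tuples n t M. kept (h j) r)
      = (real M * (\<Sum>g\<in>masks n M. kept g r)) * (real M ^ n) ^ (t - 1)"
    by simp
  also have "\<dots> = (real M ^ n) ^ t"
    using sum_kept[OF assms(2,3)] assms(1) by (cases t) auto
  finally show ?thesis .
qed

lemma sum_card_support_sparsify_le:
  assumes X: "X \<in> H_tuples n t d" and j: "j < t" and "M > 0"
  shows "(\<Sum>h\<in>mask_tuples n t M. real (card {r. sparsify n t M X h j r \<noteq> 0}) * real M)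
    \<le> (real M ^ n) ^ t * d j"
proof -
  define S where "S = {u\<in>{..<n}. X j u \<noteq> 0}"
  have "card S = min (d j) n" using H_tuples_memD[OF X j] by (simp add: S_def H_def)
  then have card_S: "card S \<le> d j" by simp
  have "(\<Sum>h\<in>mask_tuples n t M. real (card {r. sparsify n t M X h j r \<noteq> 0}) * real M)
      = (\<Sum>h\<in>mask_tuples n t M. \<Sum>r\<in>S. real M * kept (h j) r)"
    using card_support_sparsify[OF j \<open>M > 0\<close>] by (simp add: S_def sum_distrib_left mult.commute)
  also have "\<dots> = (\<Sum>r\<in>S. real M * (\<Sum>h\<in>mask_tuples n t M. kept (h j) r))"
    by (subst sum.swap) (simp add: sum_distrib_left)
  also have "\<dots> = (\<Sum>r\<in>S. (real M ^ n) ^ t)"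
    using \<open>M > 0\<close> by (intro sum.cong refl) (auto simp: S_def sum_mask_tuples_kept[OF j])
  also have "\<dots> = (real M ^ n) ^ t * card S" by simp
  also have "\<dots> \<le> (real M ^ n) ^ t * d j"
    using card_S by (intro mult_left_mono) auto
  finally show ?thesis .
qed

lemma exists_all_le_card_mult:
  fixes f :: "'i \<Rightarrow> 'a \<Rightarrow> real" and b :: "'i \<Rightarrow> real"
  assumes "finite S" "S \<noteq> {}" "finite J"
    and nonneg: "\<And>j x. j \<in> J \<Longrightarrow> x \<in> S \<Longrightarrow> 0 \<le> f j x"
    and b: "\<And>j. j \<in> J \<Longrightarrow> 0 < b j"
    and avg: "\<And>j. j \<in> J \<Longrightarrow> (\<Sum>x\<in>S. f j x) \<le> card S * b j"
  shows "\<exists>x\<in>S. \<forall>j\<in>J. f j x \<le> card J * b j"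
proof -
  define F where "F x = (\<Sum>j\<in>J. f j x / b j)" for x
  have "(\<Sum>x\<in>S. F x) = (\<Sum>j\<in>J. (\<Sum>x\<in>S. f j x) / b j)"
    unfolding F_def by (simp add: sum_divide_distrib sum.swap[of _ S])
  also have "\<dots> \<le> (\<Sum>j\<in>J. real (card S))"
    using avg b by (intro sum_mono) (simp add: divide_le_eq)
  finally have sum_F: "(\<Sum>x\<in>S. F x) \<le> (\<Sum>x\<in>S. real (card J))"
    by (simp add: mult.commute)
  have "\<exists>x\<in>S. F x \<le> card J"
  proof (rule ccontr)
    assume "\<not> ?thesis"
    then have "(\<Sum>x\<in>S. real (card J)) < (\<Sum>x\<in>S. F x)"
      using assms(1,2) by (intro sum_strict_mono) auto
    with sum_F show False by simp
  qed
  then obtain x where x: "x \<in> S" "F x \<le> card J" by blast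
  have "f j x \<le> card J * b j" if "j \<in> J" for j
  proof -
    have "f j x / b j \<le> F x"
      unfolding F_def using that x(1) nonneg b assms(3)
      by (intro member_le_sum) (auto intro: divide_nonneg_pos)
    with x(2) have "f j x / b j \<le> card J" by simp
    with b[OF that] show ?thesis by (simp add: divide_le_eq)
  qed
  with x(1) show ?thesis by blast
qed

lemma sum_sparsify_error_le:
  assumes "t > 0" "M \<ge> 1" and A: "\<forall>i<k. A i \<in> Pi_forms n t" and X: "X \<in> H_tuples n t d"
  shows "(\<Sum>h\<in>mask_tuples n t M.
      \<Sum>i<k. (form_eval n t (A i) (sparsify n t M X h) - form_eval n t (A i) X)\<^sup>2)
    \<le> (real M ^ n) ^ t * (real k * real M ^ t * real t * Min (d ` {..<t}))"
proof -
  have "(\<Sum>h\<in>mask_tuples n t M.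
        \<Sum>i<k. (form_eval n t (A i) (sparsify n t M X h) - form_eval n t (A i) X)\<^sup>2)
      = (\<Sum>i<k. \<Sum>h\<in>mask_tuples n t M. (form_eval n t (A i) (sparsify n t M X h) - form_eval n t (A i) X)\<^sup>2)"
    by (rule sum.swap)
  also have "\<dots> \<le> (\<Sum>i<k. (real M ^ n) ^ t * (real M ^ t * real t * Min (d ` {..<t})))"
    using sparsify_second_moment_le[OF _ X assms(2,1)] A by (intro sum_mono) auto
  finally show ?thesis by (simp add: algebra_simps)
qed

lemma exists_good_mask:
  assumes "t > 0" "k > 0" "M \<ge> 1"
    and A: "\<forall>i<k. A i \<in> Pi_forms n t" and X: "X \<in> H_tuples n t d" and d: "\<forall>s<t. d s \<ge> 1"
  shows "\<exists>h\<in>mask_tuples n t M.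
      (\<Sum>i<k. (form_eval n t (A i) (sparsify n t M X h) - form_eval n t (A i) X)\<^sup>2)
        \<le> (1 + real t) * (real k * real M ^ t * real t * Min (d ` {..<t}))
      \<and> (\<forall>j<t. real (card {r. sparsify n t M X h j r \<noteq> 0}) * real M \<le> (1 + real t) * d j)"
proof -
  define HS where "HS = mask_tuples n t M"
  define N where "N = (real M ^ n) ^ t"
  define err where
    "err h = (\<Sum>i<k. (form_eval n t (A i) (sparsify n t M X h) - form_eval n t (A i) X)\<^sup>2)" for h
  define supp where "supp h j = real (card {r. sparsify n t M X h j r \<noteq> 0}) * real M" for h j
  define f where "f j h = (if j < t then supp h j else err h)" for j h
  define b where
    "b j = (if j < t then real (d j) else real k * real M ^ t * real t * Min (d ` {..<t}))" for j
  have card_HS: "real (card HS) = N" by (simp add: HS_def card_mask_tuples N_def)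
  have "Min (d ` {..<t}) \<in> d ` {..<t}" using \<open>t > 0\<close> by (intro Min_in) auto
  then have "Min (d ` {..<t}) \<ge> 1" using d by auto
  then have b_pos: "0 < b j" for j
    using assms d by (auto simp: b_def)
  have err_sum: "(\<Sum>h\<in>HS. err h) \<le> N * b t"
    using sum_sparsify_error_le[OF assms(1,3) A X] by (simp add: HS_def N_def err_def b_def)
  have supp_sum: "(\<Sum>h\<in>HS. supp h j) \<le> N * b j" if "j < t" for j
    using sum_card_support_sparsify_le[OF X that, of M] \<open>M \<ge> 1\<close> that
    by (simp add: supp_def HS_def N_def b_def)
  have "\<exists>h\<in>HS. \<forall>j\<in>{..t}. f j h \<le> card {..t} * b j"
  proof (rule exists_all_le_card_mult)
    show "finite HS" "finite {..t}" by (simp_all add: HS_def finite_mask_tuples)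
    show "HS \<noteq> {}" using card_HS \<open>M \<ge> 1\<close> by (auto simp: N_def)
    show "0 \<le> f j h" for j h by (simp add: f_def supp_def err_def sum_nonneg)
    show "(\<Sum>h\<in>HS. f j h) \<le> card HS * b j" if "j \<in> {..t}" for j
      using that err_sum supp_sum card_HS by (cases "j < t") (auto simp: f_def mult.commute)
  qed (rule b_pos)
  then obtain h where "h \<in> HS" and h: "\<And>j. j \<le> t \<Longrightarrow> f j h \<le> (1 + real t) * b j" by auto
  moreover have "err h \<le> (1 + real t) * b t" using h[of t] by (simp add: f_def)
  moreover have "supp h j \<le> (1 + real t) * d j" if "j < t" for j
    using h[of j] that by (simp add: f_def b_def)
  ultimately show ?thesis by (auto simp: HS_def err_def supp_def b_def)
qed

lemma form_eval_cong:
  assumes "\<And>j r. j < t \<Longrightarrow> r < n \<Longrightarrow> Y j r = Z j r"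
  shows "form_eval n t a Y = form_eval n t a Z"
proof -
  have "(\<Prod>j<t. Y j (s j)) = (\<Prod>j<t. Z j (s j))" if "s \<in> idx_tuples n t" for s
    by (intro prod.cong refl) (simp add: assms idx_tuples_memD[OF that])
  then show ?thesis unfolding form_eval_def by (intro sum.cong refl) simp
qed

lemma form_eval_sparsify_one: "form_eval n t a (sparsify n t 1 X (\<lambda>_ _. 0)) = form_eval n t a X"
  by (rule form_eval_cong) (simp add: sparsify_def)

lemma card_support_sparsify_one:
  assumes "X \<in> H_tuples n t d" "j < t"
  shows "card {r. sparsify n t 1 X (\<lambda>_ _. 0) j r \<noteq> 0} \<le> d j"
proof -
  have "{r. sparsify n t 1 X (\<lambda>_ _. 0) j r \<noteq> 0} = {i\<in>{..<n}. X j i \<noteq> 0}"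
    using assms(2) by (auto simp: sparsify_def)
  then show ?thesis using H_tuples_memD[OF assms] by (simp add: H_def)
qed

section \<open>Counting sparse vectors\<close>

definition scaled_sparse_vectors :: "nat \<Rightarrow> nat \<Rightarrow> real \<Rightarrow> (nat \<Rightarrow> real) set" where
  "scaled_sparse_vectors n K \<beta> =
    {y. (\<forall>r. r \<ge> n \<longrightarrow> y r = 0) \<and> (\<forall>r. y r \<in> {-\<beta>, 0, \<beta>}) \<and> card {r. y r \<noteq> 0} \<le> K}"

definition scaled_sparse_tuples :: "nat \<Rightarrow> nat \<Rightarrow> nat \<Rightarrow> real \<Rightarrow> (nat \<Rightarrow> nat \<Rightarrow> real) set" where
  "scaled_sparse_tuples n t K \<beta> =
    {Y. (\<forall>j. j \<ge> t \<longrightarrow> Y j = (\<lambda>_. 0)) \<and> (\<forall>j<t. Y j \<in> scaled_sparse_vectors n K \<beta>)}"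

text \<open>A vector with at most K nonzero entries is the sum of K (position, value) pairs,
  padded with pairs (0, 0).\<close>
definition sparse_encode :: "nat \<Rightarrow> (nat \<Rightarrow> nat \<times> real) \<Rightarrow> nat \<Rightarrow> real" where
  "sparse_encode K g = (\<lambda>r. \<Sum>q<K. if fst (g q) = r then snd (g q) else 0)"

lemma scaled_sparse_vectors_subset_image:
  assumes "n \<ge> 1"
  shows "scaled_sparse_vectors n K \<beta> \<subseteq> sparse_encode K ` Pi\<^sub>E {..<K} (\<lambda>_. {..<n} \<times> {-\<beta>, 0, \<beta>})"
proof
  fix y assume y: "y \<in> scaled_sparse_vectors n K \<beta>"
  define S where "S = {r. y r \<noteq> 0}"
  have S_sub: "S \<subseteq> {..<n}"
  proof
    fix r assume "r \<in> S"
    then show "r \<in> {..<n}"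
      using y by (simp add: S_def scaled_sparse_vectors_def) (meson not_le)
  qed
  then have fin_S: "finite S" by (rule finite_subset) simp
  have card_S: "card S \<le> K" using y by (simp add: scaled_sparse_vectors_def S_def)
  obtain b where b: "bij_betw b {0..<card S} S" using ex_bij_betw_nat_finite[OF fin_S] by blast
  define g where "g q = (if q < K then (if q < card S then (b q, y (b q)) else (0, 0)) else undefined)" for q
  have "b q < n" if "q < card S" for q using b S_sub that by (auto simp: bij_betw_def)
  then have "g \<in> Pi\<^sub>E {..<K} (\<lambda>_. {..<n} \<times> {-\<beta>, 0, \<beta>})"
    using y assms by (auto simp: g_def PiE_def extensional_def scaled_sparse_vectors_def)
  moreover have "sparse_encode K g = y"
  proof
    fix r
    have "sparse_encode K g r = (\<Sum>q<K. if q < card S then (if b q = r then y (b q) else 0) else 0)"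
      unfolding sparse_encode_def by (intro sum.cong refl) (auto simp: g_def)
    also have "\<dots> = (\<Sum>q\<in>{..<K} \<inter> {q. q < card S}. if b q = r then y (b q) else 0)"
      by (simp add: sum.If_cases)
    also have "{..<K} \<inter> {q. q < card S} = {0..<card S}" using card_S by auto
    also have "(\<Sum>q\<in>{0..<card S}. if b q = r then y (b q) else 0) = (\<Sum>x\<in>S. if x = r then y x else 0)"
      using b by (rule sum.reindex_bij_betw)
    also have "\<dots> = y r" using fin_S by (simp add: S_def)
    finally show "sparse_encode K g r = y r" .
  qed
  ultimately show "y \<in> sparse_encode K ` Pi\<^sub>E {..<K} (\<lambda>_. {..<n} \<times> {-\<beta>, 0, \<beta>})"
    by blast
qed

lemma finite_card_scaled_sparse_vectors:
  assumes "n \<ge> 1"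
  shows "finite (scaled_sparse_vectors n K \<beta>)" and "card (scaled_sparse_vectors n K \<beta>) \<le> (3 * n) ^ K"
proof -
  let ?G = "Pi\<^sub>E {..<K} (\<lambda>_. {..<n} \<times> {-\<beta>, 0, \<beta>})"
  have fin_G: "finite ?G" by (simp add: finite_PiE)
  have "card ?G = card ({..<n} \<times> {-\<beta>, 0, \<beta>}) ^ K" by (simp add: card_PiE)
  also have "\<dots> \<le> (3 * n) ^ K"
    by (intro power_mono) (auto simp: card_cartesian_product card_insert_le_m1 mult.commute)
  finally have card_G: "card ?G \<le> (3 * n) ^ K" .
  note sub = scaled_sparse_vectors_subset_image[OF assms, of K \<beta>]
  show "finite (scaled_sparse_vectors n K \<beta>)" using finite_subset[OF sub] fin_G by simp
  have "card (scaled_sparse_vectors n K \<beta>) \<le> card (sparse_encode K ` ?G)"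
    using sub fin_G by (intro card_mono) auto
  also have "\<dots> \<le> card ?G" using fin_G by (rule card_image_le)
  finally show "card (scaled_sparse_vectors n K \<beta>) \<le> (3 * n) ^ K" using card_G by simp
qed

lemma finite_card_scaled_sparse_tuples:
  assumes "n \<ge> 1"
  shows "finite (scaled_sparse_tuples n t K \<beta>)"
    and "card (scaled_sparse_tuples n t K \<beta>) \<le> (3 * n) ^ (t * K)"
proof -
  define P where "P = Pi\<^sub>E {..<t} (\<lambda>_. scaled_sparse_vectors n K \<beta>)"
  define ext where "ext Z = (\<lambda>j. if j < t then Z j else (\<lambda>_. 0))" for Z :: "nat \<Rightarrow> nat \<Rightarrow> real"
  note fin_card = finite_card_scaled_sparse_vectors[OF assms]
  have fin_P: "finite P" using fin_card by (simp add: P_def finite_PiE)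
  have "card P = card (scaled_sparse_vectors n K \<beta>) ^ t" by (simp add: P_def card_PiE)
  also have "\<dots> \<le> ((3 * n) ^ K) ^ t" using fin_card by (intro power_mono) auto
  also have "\<dots> = (3 * n) ^ (t * K)" by (simp only: mult.commute[of t K] power_mult)
  finally have card_P: "card P \<le> (3 * n) ^ (t * K)" .
  have sub: "scaled_sparse_tuples n t K \<beta> \<subseteq> ext ` P"
  proof
    fix Y assume Y: "Y \<in> scaled_sparse_tuples n t K \<beta>"
    have "restrict Y {..<t} \<in> P" using Y by (auto simp: P_def scaled_sparse_tuples_def)
    moreover have "ext (restrict Y {..<t}) = Y" using Y by (auto simp: ext_def scaled_sparse_tuples_def)
    ultimately show "Y \<in> ext ` P" by (metis image_eqI)
  qed
  show "finite (scaled_sparse_tuples n t K \<beta>)" using sub fin_P by (rule finite_subset[OF _ finite_imageI])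
  have "card (scaled_sparse_tuples n t K \<beta>) \<le> card (ext ` P)" using sub fin_P by (intro card_mono) auto
  also have "\<dots> \<le> card P" using fin_P by (rule card_image_le)
  finally show "card (scaled_sparse_tuples n t K \<beta>) \<le> (3 * n) ^ (t * K)" using card_P by simp
qed

lemma sparsify_in_scaled_sparse_tuples:
  assumes X: "X \<in> H_tuples n t d" and K: "\<forall>j<t. card {r. sparsify n t M X h j r \<noteq> 0} \<le> K"
  shows "sparsify n t M X h \<in> scaled_sparse_tuples n t K (real M)"
proof -
  have "sparsify n t M X h j \<in> scaled_sparse_vectors n K (real M)" if j: "j < t" for j
  proof -
    have "sparsify n t M X h j r \<in> {- real M, 0, real M}" for r
      using j H_memD[OF H_tuples_memD[OF X j], of r] by (auto simp: sparsify_def)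
    then show ?thesis using K j by (auto simp: scaled_sparse_vectors_def sparsify_def)
  qed
  then show ?thesis by (auto simp: scaled_sparse_tuples_def sparsify_def)
qed

lemma ln_card_le:
  assumes "finite V" "V \<noteq> {}" "card V \<le> (3 * n) ^ E" "n \<ge> 1"
  shows "ln (card V) \<le> real E * ln (3 * real n)"
proof -
  have "real (card V) \<le> real ((3 * n) ^ E)" using assms(3) by (simp only: of_nat_le_iff)
  then have "ln (card V) \<le> ln (real ((3 * n) ^ E))"
    using assms by (subst ln_le_cancel_iff) (auto simp: card_gt_0_iff)
  also have "real ((3 * n) ^ E) = (3 * real n) ^ E" by simp
  also have "ln \<dots> = real E * ln (3 * real n)" using assms(4) by (intro ln_realpow)
  finally show ?thesis .
qed

section \<open>Chaining\<close>

lemma square_diff_le: "(a - b)\<^sup>2 \<le> 2 * (a - c)\<^sup>2 + 2 * (b - c)\<^sup>2" for a b c :: real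
proof -
  have "0 \<le> (a + b - 2 * c)\<^sup>2" by simp
  then show ?thesis by (simp add: power2_eq_square algebra_simps)
qed

locale chaining_setup =
  fixes n t k :: nat and A :: "nat \<Rightarrow> (nat \<Rightarrow> nat) \<Rightarrow> real" and d :: "nat \<Rightarrow> nat"
  assumes n_ge_2: "n \<ge> 2" and t_pos: "t > 0" and k_pos: "k > 0"
    and A: "\<forall>i<k. A i \<in> Pi_forms n t" and d_pos: "\<forall>s<t. d s \<ge> 1"
begin

definition "dmax = Max (d ` {..<t})"
definition "dmin = Min (d ` {..<t})"
definition "forms_at X = (\<lambda>i. form_eval n t (A i) X)"
definition "supp_bound l = ((1 + t) * dmax) div 2 ^ l"
definition "approx_err l = (1 + real t) * (real k * real (2 ^ l :: nat) ^ t * real t * real dmin)"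

text \<open>The level-l point of the chain through X: a sparsification of X with keep-probability
  2 ^ -l, chosen by exists_sparse_approx below; level 0 is X itself.\<close>
definition "approx l X = (if l = 0 then sparsify n t 1 X (\<lambda>_ _. 0)
   else SOME Y. Y \<in> scaled_sparse_tuples n t (supp_bound l) (real (2 ^ l :: nat))
     \<and> (\<Sum>i<k. (forms_at Y i - forms_at X i)\<^sup>2) \<le> approx_err l)"

definition "increments l =
  (\<lambda>X i. forms_at (approx l X) i - forms_at (approx (Suc l) X) i) ` H_tuples n t d"
definition "last_level L = (\<lambda>X. forms_at (approx L X)) ` H_tuples n t d"

lemma d_le_dmax: "j < t \<Longrightarrow> d j \<le> dmax"
  by (auto simp: dmax_def)

lemma dmin_ge_1: "dmin \<ge> 1"
proof -
  have "dmin \<in> d ` {..<t}" unfolding dmin_def using t_pos by (intro Min_in) auto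
  then show ?thesis using d_pos by auto
qed

lemma sum_sq_forms_at_le:
  assumes "X \<in> H_tuples n t d"
  shows "(\<Sum>i<k. (forms_at X i)\<^sup>2) \<le> real k * real dmin ^ 2"
proof -
  have "(forms_at X i)\<^sup>2 \<le> real dmin ^ 2" if "i < k" for i
    using abs_form_eval_le_Min[of "A i" n t X d] A assms t_pos that
    by (simp add: forms_at_def dmin_def abs_le_square_iff[symmetric])
  then have "(\<Sum>i<k. (forms_at X i)\<^sup>2) \<le> (\<Sum>i<k. real dmin ^ 2)" by (intro sum_mono) simp
  then show ?thesis by simp
qed

lemma approx_err_nonneg: "0 \<le> approx_err l"
  by (simp add: approx_err_def)

lemma forms_at_approx_0: "forms_at (approx 0 X) = forms_at X"
  unfolding approx_def forms_at_def using form_eval_sparsify_one by simp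

lemma exists_sparse_approx:
  assumes X: "X \<in> H_tuples n t d"
  shows "\<exists>Y. Y \<in> scaled_sparse_tuples n t (supp_bound l) (real (2 ^ l :: nat))
    \<and> (\<Sum>i<k. (forms_at Y i - forms_at X i)\<^sup>2) \<le> approx_err l"
proof -
  define M where "M = (2 ^ l :: nat)"
  have "M \<ge> 1" by (simp add: M_def)
  obtain h where h: "h \<in> mask_tuples n t M"
    "(\<Sum>i<k. (form_eval n t (A i) (sparsify n t M X h) - form_eval n t (A i) X)\<^sup>2)
       \<le> (1 + real t) * (real k * real M ^ t * real t * Min (d ` {..<t}))"
    "\<forall>j<t. real (card {r. sparsify n t M X h j r \<noteq> 0}) * real M \<le> (1 + real t) * d j"
    using exists_good_mask[OF t_pos k_pos \<open>M \<ge> 1\<close> A X d_pos] by blast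
  have "card {r. sparsify n t M X h j r \<noteq> 0} \<le> supp_bound l" if j: "j < t" for j
  proof -
    have "(1 + real t) * real (d j) \<le> (1 + real t) * real dmax"
      using d_le_dmax[OF j] by (intro mult_left_mono) auto
    then have "real (card {r. sparsify n t M X h j r \<noteq> 0}) * real M \<le> (1 + real t) * real dmax"
      using h(3) j by (meson order_trans)
    then have "real (card {r. sparsify n t M X h j r \<noteq> 0} * M) \<le> real ((1 + t) * dmax)"
      by (simp add: algebra_simps)
    then have "card {r. sparsify n t M X h j r \<noteq> 0} * M \<le> (1 + t) * dmax"
      by (simp only: of_nat_le_iff)
    then show ?thesis by (simp add: supp_bound_def less_eq_div_iff_mult_less_eq M_def)
  qed
  then have "sparsify n t M X h \<in> scaled_sparse_tuples n t (supp_bound l) (real M)"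
    by (intro sparsify_in_scaled_sparse_tuples[OF X]) auto
  moreover have "(\<Sum>i<k. (forms_at (sparsify n t M X h) i - forms_at X i)\<^sup>2) \<le> approx_err l"
    using h(2) by (simp add: M_def forms_at_def approx_err_def dmin_def)
  ultimately show ?thesis unfolding M_def by blast
qed

lemma approx_spec:
  assumes X: "X \<in> H_tuples n t d"
  shows "approx l X \<in> scaled_sparse_tuples n t (supp_bound l) (real (2 ^ l :: nat))"
    and "(\<Sum>i<k. (forms_at (approx l X) i - forms_at X i)\<^sup>2) \<le> approx_err l"
proof -
  have "approx l X \<in> scaled_sparse_tuples n t (supp_bound l) (real (2 ^ l :: nat))
      \<and> (\<Sum>i<k. (forms_at (approx l X) i - forms_at X i)\<^sup>2) \<le> approx_err l"
  proof (cases "l = 0")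
    case True
    have "card {r. sparsify n t 1 X (\<lambda>_ _. 0) j r \<noteq> 0} \<le> supp_bound 0" if "j < t" for j
    proof -
      have "card {r. sparsify n t 1 X (\<lambda>_ _. 0) j r \<noteq> 0} \<le> d j"
        by (rule card_support_sparsify_one[OF X that])
      also have "\<dots> \<le> (1 + t) * dmax" using d_le_dmax[OF that] by simp
      finally show ?thesis by (simp add: supp_bound_def)
    qed
    then have "sparsify n t 1 X (\<lambda>_ _. 0) \<in> scaled_sparse_tuples n t (supp_bound 0) (real (1::nat))"
      by (intro sparsify_in_scaled_sparse_tuples[OF X]) auto
    then show ?thesis
      using True forms_at_approx_0[of X] by (simp add: approx_def approx_err_def)
  next
    case False
    from someI_ex[OF exists_sparse_approx[OF X]] show ?thesis using False by (simp add: approx_def)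
  qed
  then show "approx l X \<in> scaled_sparse_tuples n t (supp_bound l) (real (2 ^ l :: nat))"
    and "(\<Sum>i<k. (forms_at (approx l X) i - forms_at X i)\<^sup>2) \<le> approx_err l"
    by auto
qed

lemma supp_bound_le: "real (supp_bound l) \<le> (1 + real t) * real dmax / 2 ^ l"
proof -
  have "supp_bound l * 2 ^ l \<le> (1 + t) * dmax"
    unfolding supp_bound_def by (rule div_times_less_eq_dividend)
  then have "real (supp_bound l * 2 ^ l) \<le> real ((1 + t) * dmax)"
    by (simp only: of_nat_le_iff)
  then have "real (supp_bound l) * 2 ^ l \<le> (1 + real t) * real dmax"
    by (simp add: algebra_simps)
  then show ?thesis by (simp add: field_simps)
qed

lemma exp_max_le_chain:
  "exp_max n t k A d \<le> (\<Sum>l<L. rademacher_avg k (increments l)) + rademacher_avg k (last_level L)"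
proof -
  let ?HT = "H_tuples n t d"
  have "exp_max n t k A d = rademacher_avg k (forms_at ` ?HT)"
    by (simp add: exp_max_def rademacher_avg_def sign_vectors_def forms_at_def image_image)
  also have "forms_at ` ?HT = (\<lambda>X i. (\<Sum>l<L. forms_at (approx l X) i - forms_at (approx (Suc l) X) i)
      + forms_at (approx L X) i) ` ?HT"
  proof (intro image_cong refl ext)
    fix X i
    have "(\<Sum>l<L. forms_at (approx l X) i - forms_at (approx (Suc l) X) i)
        = forms_at (approx 0 X) i - forms_at (approx L X) i"
      by (rule sum_lessThan_telescope')
    then show "forms_at X i = (\<Sum>l<L. forms_at (approx l X) i - forms_at (approx (Suc l) X) i)
        + forms_at (approx L X) i"
      by (simp add: forms_at_approx_0)
  qed
  also have "rademacher_avg k \<dots> \<le> (\<Sum>l<L. rademacher_avg k (increments l)) + rademacher_avg k (last_level L)"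
    unfolding increments_def last_level_def
    by (rule rademacher_avg_sum_le) (simp_all add: finite_H_tuples H_tuples_nonempty)
  finally show ?thesis .
qed

lemma finite_increments: "finite (increments l)" and increments_nonempty: "increments l \<noteq> {}"
  by (simp_all add: increments_def finite_H_tuples H_tuples_nonempty)

lemma finite_last_level: "finite (last_level L)" and last_level_nonempty: "last_level L \<noteq> {}"
  by (simp_all add: last_level_def finite_H_tuples H_tuples_nonempty)

lemma card_increments_le: "card (increments l) \<le> (3 * n) ^ (t * supp_bound l + t * supp_bound (Suc l))"
proof -
  define F1 where "F1 = scaled_sparse_tuples n t (supp_bound l) (real (2 ^ l :: nat))"
  define F2 where "F2 = scaled_sparse_tuples n t (supp_bound (Suc l)) (real (2 ^ Suc l :: nat))"
  have n1: "n \<ge> 1" using n_ge_2 by simp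
  note F1 = finite_card_scaled_sparse_tuples[OF n1, of t "supp_bound l" "real (2 ^ l :: nat)", folded F1_def]
  note F2 = finite_card_scaled_sparse_tuples[OF n1, of t "supp_bound (Suc l)" "real (2 ^ Suc l :: nat)", folded F2_def]
  have sub: "increments l \<subseteq> (\<lambda>(Y, Z) i. forms_at Y i - forms_at Z i) ` (F1 \<times> F2)"
  proof
    fix w assume "w \<in> increments l"
    then obtain X where X: "X \<in> H_tuples n t d"
      and w: "w = (\<lambda>i. forms_at (approx l X) i - forms_at (approx (Suc l) X) i)"
      by (auto simp: increments_def)
    have "(approx l X, approx (Suc l) X) \<in> F1 \<times> F2"
      using approx_spec(1)[OF X, of l] approx_spec(1)[OF X, of "Suc l"] unfolding F1_def F2_def by blast
    then show "w \<in> (\<lambda>(Y, Z) i. forms_at Y i - forms_at Z i) ` (F1 \<times> F2)"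
      using w by force
  qed
  have "card (increments l) \<le> card ((\<lambda>(Y, Z) i. forms_at Y i - forms_at Z i) ` (F1 \<times> F2))"
    using sub F1 F2 by (intro card_mono) auto
  also have "\<dots> \<le> card (F1 \<times> F2)" using F1 F2 by (intro card_image_le) auto
  also have "\<dots> = card F1 * card F2" by (rule card_cartesian_product)
  also have "\<dots> \<le> (3 * n) ^ (t * supp_bound l) * (3 * n) ^ (t * supp_bound (Suc l))"
    using F1 F2 by (intro mult_le_mono) auto
  finally show ?thesis by (simp add: power_add)
qed

lemma card_last_level_le: "card (last_level L) \<le> (3 * n) ^ (t * supp_bound L)"
proof -
  define F where "F = scaled_sparse_tuples n t (supp_bound L) (real (2 ^ L :: nat))"
  have n1: "n \<ge> 1" using n_ge_2 by simp
  note F = finite_card_scaled_sparse_tuples[OF n1, of t "supp_bound L" "real (2 ^ L :: nat)", folded F_def]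
  have "last_level L \<subseteq> forms_at ` F"
    using approx_spec(1) by (auto simp: last_level_def F_def)
  then have "card (last_level L) \<le> card (forms_at ` F)" using F by (intro card_mono) auto
  also have "\<dots> \<le> card F" using F by (intro card_image_le)
  finally show ?thesis using F by simp
qed

lemma sum_sq_increments_le:
  assumes "w \<in> increments l"
  shows "(\<Sum>i<k. (w i)\<^sup>2) \<le> 2 * approx_err l + 2 * approx_err (Suc l)"
proof -
  obtain X where X: "X \<in> H_tuples n t d"
    and w: "w = (\<lambda>i. forms_at (approx l X) i - forms_at (approx (Suc l) X) i)"
    using assms unfolding increments_def by blast
  have "(\<Sum>i<k. (w i)\<^sup>2) \<le> (\<Sum>i<k. 2 * (forms_at (approx l X) i - forms_at X i)\<^sup>2
      + 2 * (forms_at (approx (Suc l) X) i - forms_at X i)\<^sup>2)"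
    unfolding w by (intro sum_mono) (rule square_diff_le)
  also have "\<dots> \<le> 2 * approx_err l + 2 * approx_err (Suc l)"
    using approx_spec(2)[OF X, of l] approx_spec(2)[OF X, of "Suc l"]
    by (simp add: sum.distrib sum_distrib_left[symmetric])
  finally show ?thesis .
qed

lemma sum_sq_last_level_le:
  assumes "w \<in> last_level L"
  shows "(\<Sum>i<k. (w i)\<^sup>2) \<le> 2 * real k * real dmin ^ 2 + 2 * approx_err L"
proof -
  obtain X where X: "X \<in> H_tuples n t d" and w: "w = forms_at (approx L X)"
    using assms unfolding last_level_def by blast
  have "(\<Sum>i<k. (w i)\<^sup>2) \<le> (\<Sum>i<k. 2 * (forms_at (approx L X) i - forms_at X i)\<^sup>2 + 2 * (forms_at X i)\<^sup>2)"
    unfolding w using square_diff_le[of _ 0] by (intro sum_mono) simp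
  also have "\<dots> \<le> 2 * approx_err L + 2 * (real k * real dmin ^ 2)"
    using approx_spec(2)[OF X, of L] sum_sq_forms_at_le[OF X]
    by (simp add: sum.distrib sum_distrib_left[symmetric])
  finally show ?thesis by (simp add: algebra_simps)
qed

lemma rademacher_avg_increments_le:
  "rademacher_avg k (increments l)
    \<le> sqrt (2 * approx_err l + 2 * approx_err (Suc l))
      * sqrt (2 * (real (t * supp_bound l + t * supp_bound (Suc l)) * ln (3 * real n)))"
proof (rule massart_finite_class[OF finite_increments increments_nonempty])
  show "(\<Sum>i<k. (w i)\<^sup>2) \<le> (sqrt (2 * approx_err l + 2 * approx_err (Suc l)))\<^sup>2"
    if "w \<in> increments l" for w
    using sum_sq_increments_le[OF that] approx_err_nonneg[of l] approx_err_nonneg[of "Suc l"] by simp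
  show "0 \<le> sqrt (2 * approx_err l + 2 * approx_err (Suc l))"
    using approx_err_nonneg[of l] approx_err_nonneg[of "Suc l"] by simp
  show "ln (card (increments l)) \<le> real (t * supp_bound l + t * supp_bound (Suc l)) * ln (3 * real n)"
    using n_ge_2 by (intro ln_card_le finite_increments increments_nonempty card_increments_le) simp
qed

lemma rademacher_avg_last_level_le:
  "rademacher_avg k (last_level L)
    \<le> sqrt (2 * real k * real dmin ^ 2 + 2 * approx_err L)
      * sqrt (2 * (real (t * supp_bound L) * ln (3 * real n)))"
proof (rule massart_finite_class[OF finite_last_level last_level_nonempty])
  show "(\<Sum>i<k. (w i)\<^sup>2) \<le> (sqrt (2 * real k * real dmin ^ 2 + 2 * approx_err L))\<^sup>2"
    if "w \<in> last_level L" for w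
    using sum_sq_last_level_le[OF that] approx_err_nonneg[of L] by simp
  show "0 \<le> sqrt (2 * real k * real dmin ^ 2 + 2 * approx_err L)"
    using approx_err_nonneg[of L] by simp
  show "ln (card (last_level L)) \<le> real (t * supp_bound L) * ln (3 * real n)"
    using n_ge_2 by (intro ln_card_le finite_last_level last_level_nonempty card_last_level_le) simp
qed

end

section \<open>Summing the chain\<close>

lemma geometric_sum_le:
  fixes \<rho> :: real
  assumes "\<rho> \<ge> 2"
  shows "(\<Sum>l<L. \<rho> ^ l) \<le> \<rho> ^ L - 1"
proof (induction L)
  case (Suc L)
  have "2 * \<rho> ^ L \<le> \<rho> * \<rho> ^ L" using assms by (intro mult_right_mono) auto
  with Suc show ?case by simp
qed simp

lemma ln_three_mult_le:
  assumes "n \<ge> 2"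
  shows "ln (3 * real n) \<le> 3 * ln (real n)"
proof -
  have "(3::real) \<le> real n ^ 2"
    using assms mult_mono[of 2 "real n" 2 "real n"] by (simp add: power2_eq_square)
  then have "ln 3 \<le> ln (real n ^ 2)" using assms by (subst ln_le_cancel_iff) auto
  then show ?thesis using assms by (simp add: ln_mult ln_realpow)
qed

lemma exists_power_bracket:
  fixes m t :: nat
  assumes "m \<ge> 1" "t \<ge> 1"
  shows "\<exists>L. 2 ^ (L * t) \<le> m \<and> m < 2 ^ (Suc L * t)"
proof -
  define S where "S = {l. 2 ^ (l * t) \<le> m}"
  have "l \<le> m" if "l \<in> S" for l
  proof -
    have "l < 2 ^ l" by (rule less_exp)
    also have "(2::nat) ^ l \<le> 2 ^ (l * t)" using assms(2) by (intro power_increasing) auto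
    finally show ?thesis using that by (simp add: S_def)
  qed
  then have fin: "finite S" by (meson finite_atMost finite_subset atMost_iff subsetI)
  have "0 \<in> S" using assms(1) by (simp add: S_def)
  with fin have "Max S \<in> S" by (intro Max_in) auto
  moreover have "Suc (Max S) \<notin> S" using Max_ge[OF fin, of "Suc (Max S)"] by auto
  ultimately show ?thesis by (auto simp: S_def)
qed

definition increment_const :: "nat \<Rightarrow> real" where
  "increment_const t = 48 * real t ^ 2 * (1 + real t) ^ 2 * 2 ^ t"

definition last_level_const :: "nat \<Rightarrow> real" where
  "last_level_const t = 12 * (1 + (1 + real t) * real t) * real t * (1 + real t)"

definition chaining_const :: "nat \<Rightarrow> real" where
  "chaining_const t = sqrt (increment_const t) + sqrt (2 * last_level_const t)"

lemma chaining_const_pos: "t > 0 \<Longrightarrow> chaining_const t > 0"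
  by (simp add: chaining_const_def increment_const_def last_level_const_def add_pos_nonneg)

context chaining_setup
begin

lemma approx_err_step_le:
  "2 * approx_err l + 2 * approx_err (Suc l)
    \<le> 4 * (1 + real t) * real k * real t * real dmin * 2 ^ t * (2 ^ l) ^ t"
proof -
  have "2 * approx_err l + 2 * approx_err (Suc l)
      = (2 * (1 + real t) * real k * real t * real dmin * (2 ^ l) ^ t) * (1 + 2 ^ t)"
    by (simp add: approx_err_def power_mult_distrib algebra_simps)
  also have "\<dots> \<le> (2 * (1 + real t) * real k * real t * real dmin * (2 ^ l) ^ t) * (2 * 2 ^ t)"
    by (intro mult_left_mono) auto
  finally show ?thesis by (simp add: algebra_simps)
qed

lemma supp_bound_step_ln_le:
  "2 * (real (t * supp_bound l + t * supp_bound (Suc l)) * ln (3 * real n))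
    \<le> 12 * real t * (1 + real t) * real dmax * ln (real n) / 2 ^ l"
proof -
  define p :: real where "p = 2 ^ l"
  have p0: "p > 0" by (simp add: p_def)
  have supp_Suc: "real (supp_bound (Suc l)) \<le> (1 + real t) * real dmax / p"
  proof -
    have "real (supp_bound (Suc l)) \<le> (1 + real t) * real dmax / (2 * p)"
      using supp_bound_le[of "Suc l"] by (simp add: p_def)
    also have "\<dots> \<le> (1 + real t) * real dmax / p" using p0 by (intro divide_left_mono) auto
    finally show ?thesis .
  qed
  have "real (t * supp_bound l + t * supp_bound (Suc l))
      = real t * real (supp_bound l) + real t * real (supp_bound (Suc l))" by simp
  also have "\<dots> \<le> real t * ((1 + real t) * real dmax / p) + real t * ((1 + real t) * real dmax / p)"
    using supp_bound_le[of l] supp_Suc by (intro add_mono mult_left_mono) (auto simp: p_def)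
  finally have "real (t * supp_bound l + t * supp_bound (Suc l))
      \<le> 2 * real t * ((1 + real t) * real dmax / p)" by simp
  then have "real (t * supp_bound l + t * supp_bound (Suc l)) * ln (3 * real n)
      \<le> 2 * real t * ((1 + real t) * real dmax / p) * (3 * ln (real n))"
    using n_ge_2 ln_three_mult_le[OF n_ge_2] p0 by (intro mult_mono) auto
  then have "2 * (real (t * supp_bound l + t * supp_bound (Suc l)) * ln (3 * real n))
      \<le> 2 * (2 * real t * ((1 + real t) * real dmax / p) * (3 * ln (real n)))" by linarith
  also have "\<dots> = 12 * real t * (1 + real t) * real dmax * ln (real n) / p"
    by (simp add: field_simps)
  finally show ?thesis by (simp add: p_def)
qed

lemma increment_numeric_le:
  "sqrt (2 * approx_err l + 2 * approx_err (Suc l))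
      * sqrt (2 * (real (t * supp_bound l + t * supp_bound (Suc l)) * ln (3 * real n)))
    \<le> sqrt (increment_const t) * sqrt (real k * real dmin * real dmax * ln (real n))
      * sqrt (2 ^ (t - 1)) ^ l"
proof -
  define p :: real where "p = 2 ^ l"
  have p0: "p > 0" by (simp add: p_def)
  define Q where "Q = real k * real dmin * real dmax * ln (real n)"
  have "(2 * approx_err l + 2 * approx_err (Suc l))
        * (2 * (real (t * supp_bound l + t * supp_bound (Suc l)) * ln (3 * real n)))
      \<le> (4 * (1 + real t) * real k * real t * real dmin * 2 ^ t * p ^ t)
        * (12 * real t * (1 + real t) * real dmax * ln (real n) / p)"
    using approx_err_step_le[of l] supp_bound_step_ln_le[of l] approx_err_nonneg[of l]
      approx_err_nonneg[of "Suc l"] n_ge_2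
    by (intro mult_mono) (auto simp: p_def)
  also have "\<dots> = increment_const t * Q * (p ^ t / p)"
    unfolding increment_const_def Q_def using p0 by (simp add: field_simps power2_eq_square)
  also have "p ^ t / p = (2 ^ (t - 1)) ^ l"
    using t_pos p0 by (cases t) (simp_all add: p_def power_mult[symmetric] mult.commute)
  finally have "sqrt (2 * approx_err l + 2 * approx_err (Suc l))
        * sqrt (2 * (real (t * supp_bound l + t * supp_bound (Suc l)) * ln (3 * real n)))
      \<le> sqrt (increment_const t * Q * (2 ^ (t - 1)) ^ l)"
    by (simp flip: real_sqrt_mult)
  then show ?thesis by (simp add: Q_def real_sqrt_mult real_sqrt_power)
qed

lemma last_level_err_le:
  assumes "(2::real) ^ (L * t) \<le> real dmin"
  shows "2 * real k * real dmin ^ 2 + 2 * approx_err L \<le> 2 * (1 + (1 + real t) * real t) * real k * real dmin ^ 2"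
proof -
  have "approx_err L = (1 + real t) * real k * real t * real dmin * (2 ^ L) ^ t"
    by (simp add: approx_err_def)
  also have "\<dots> \<le> (1 + real t) * real k * real t * real dmin * real dmin"
    using assms by (intro mult_left_mono) (auto simp: power_mult)
  finally show ?thesis by (simp add: power2_eq_square algebra_simps)
qed

lemma supp_bound_ln_le:
  "2 * (real (t * supp_bound L) * ln (3 * real n)) \<le> 6 * real t * (1 + real t) * real dmax * ln (real n) / 2 ^ L"
proof -
  have "real (t * supp_bound L) = real t * real (supp_bound L)" by simp
  also have "\<dots> \<le> real t * ((1 + real t) * real dmax / 2 ^ L)"
    using supp_bound_le[of L] by (intro mult_left_mono) auto
  finally have "real (t * supp_bound L) * ln (3 * real n) \<le> real t * ((1 + real t) * real dmax / 2 ^ L) * (3 * ln (real n))"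
    using n_ge_2 ln_three_mult_le[OF n_ge_2] by (intro mult_mono) auto
  then have "2 * (real (t * supp_bound L) * ln (3 * real n))
      \<le> 2 * (real t * ((1 + real t) * real dmax / 2 ^ L) * (3 * ln (real n)))" by linarith
  also have "\<dots> = 6 * real t * (1 + real t) * real dmax * ln (real n) / 2 ^ L"
    by (simp add: field_simps)
  finally show ?thesis .
qed

lemma last_level_numeric_le:
  assumes "(2::real) ^ (L * t) \<le> real dmin"
  shows "sqrt (2 * real k * real dmin ^ 2 + 2 * approx_err L) * sqrt (2 * (real (t * supp_bound L) * ln (3 * real n)))
    \<le> sqrt (last_level_const t) * sqrt (real k * real dmax * ln (real n)) * sqrt (real dmin ^ 2 / 2 ^ L)"
proof -
  define Q where "Q = real k * real dmax * ln (real n)"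
  have "(2 * real k * real dmin ^ 2 + 2 * approx_err L) * (2 * (real (t * supp_bound L) * ln (3 * real n)))
      \<le> (2 * (1 + (1 + real t) * real t) * real k * real dmin ^ 2)
        * (6 * real t * (1 + real t) * real dmax * ln (real n) / 2 ^ L)"
    using last_level_err_le[OF assms] supp_bound_ln_le[of L] approx_err_nonneg[of L] n_ge_2
    by (intro mult_mono) auto
  also have "\<dots> = last_level_const t * Q * (real dmin ^ 2 / 2 ^ L)"
    unfolding last_level_const_def Q_def by (simp add: field_simps power2_eq_square)
  finally have "sqrt (2 * real k * real dmin ^ 2 + 2 * approx_err L)
        * sqrt (2 * (real (t * supp_bound L) * ln (3 * real n)))
      \<le> sqrt (last_level_const t * Q * (real dmin ^ 2 / 2 ^ L))"
    by (simp flip: real_sqrt_mult)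
  also have "\<dots> = sqrt (last_level_const t) * sqrt Q * sqrt (real dmin ^ 2 / 2 ^ L)"
    by (simp only: real_sqrt_mult)
  finally show ?thesis unfolding Q_def .
qed

definition "mu = real dmin powr (1 / (2 * real t))"

lemma mu_pos: "mu > 0"
  using dmin_ge_1 by (simp add: mu_def)

lemma mu_power: "mu ^ (2 * t - m) = real dmin powr (1 - real m / (2 * real t))" if "m \<le> 2 * t"
proof -
  have "mu ^ (2 * t - m) = real dmin powr (real (2 * t - m) * (1 / (2 * real t)))"
    unfolding mu_def using dmin_ge_1 by (subst powr_power) auto
  also have "real (2 * t - m) * (1 / (2 * real t)) = 1 - real m / (2 * real t)"
    using t_pos that by (simp add: of_nat_diff field_simps)
  finally show ?thesis .
qed

lemma mu_power_2t: "mu ^ (2 * t) = real dmin"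
  using mu_power[of 0] dmin_ge_1 by simp

lemma real_two_power_le_dmin:
  assumes "2 ^ (L * t) \<le> dmin"
  shows "(2::real) ^ (L * t) \<le> real dmin"
proof -
  have "real (2 ^ (L * t)) \<le> real dmin" using assms by (simp only: of_nat_le_iff)
  then show ?thesis by simp
qed

lemma two_power_le_mu_square:
  assumes "2 ^ (L * t) \<le> dmin"
  shows "(2::real) ^ L \<le> mu\<^sup>2"
proof -
  have "((2::real) ^ L) ^ t = 2 ^ (L * t)" by (simp add: power_mult)
  also have "\<dots> \<le> real dmin" using real_two_power_le_dmin[OF assms] .
  also have "\<dots> = (mu\<^sup>2) ^ t" using mu_power_2t by (simp add: power_mult)
  finally have "((2::real) ^ L) ^ Suc (t - 1) \<le> (mu\<^sup>2) ^ Suc (t - 1)" using t_pos by simp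
  then show ?thesis by (rule power_le_imp_le_base) simp
qed

lemma mu_square_less:
  assumes "dmin < 2 ^ (Suc L * t)"
  shows "mu\<^sup>2 < 2 * 2 ^ L"
proof -
  have "(mu\<^sup>2) ^ t = real dmin" using mu_power_2t by (simp add: power_mult)
  also have "\<dots> < real (2 ^ (Suc L * t))" using assms by (simp only: of_nat_less_iff)
  also have "\<dots> = 2 ^ (Suc L * t)" by simp
  also have "\<dots> = (2 * 2 ^ L) ^ t" by (simp add: power_add power_mult power_mult_distrib)
  finally show ?thesis by (rule power_less_imp_less_base) simp
qed

lemma sqrt_dmin: "sqrt (real dmin) = mu ^ t"
proof -
  have "real dmin = (mu ^ t)\<^sup>2" using mu_power_2t by (simp add: power_mult[symmetric] mult.commute)
  then show ?thesis using mu_pos by simp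
qed

lemma sqrt_two_power_power_le:
  assumes "2 ^ (L * t) \<le> dmin"
  shows "sqrt (2 ^ (t - 1)) ^ L \<le> mu ^ (t - 1)"
proof -
  have "sqrt (2 ^ (t - 1)) ^ L = sqrt (((2::real) ^ L) ^ (t - 1))"
    by (simp add: real_sqrt_power power_mult[symmetric] mult.commute)
  also have "\<dots> \<le> sqrt ((mu\<^sup>2) ^ (t - 1))"
    using two_power_le_mu_square[OF assms] by (intro real_sqrt_le_mono power_mono) auto
  also have "(mu\<^sup>2) ^ (t - 1) = (mu ^ (t - 1))\<^sup>2"
    by (simp only: power_mult[symmetric] mult.commute)
  also have "sqrt \<dots> = mu ^ (t - 1)" using mu_pos by simp
  finally show ?thesis .
qed

text \<open>The increments grow geometrically with ratio sqrt (2 ^ (t - 1)) \<ge> 2 (this is where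
  t \<ge> 3 is needed), so their sum is dominated by the last one, at the level where
  2 ^ (L * t) is about dmin.\<close>
lemma sum_increments_le:
  assumes "t \<ge> 3" and L: "2 ^ (L * t) \<le> dmin"
  shows "(\<Sum>l<L. rademacher_avg k (increments l))
    \<le> sqrt (increment_const t) * sqrt (real k * real dmax * ln (real n)) * mu ^ (2 * t - 1)"
proof -
  define Z where "Z = sqrt (real k * real dmax * ln (real n))"
  define \<rho> where "\<rho> = sqrt (2 ^ (t - 1) :: real)"
  have Z0: "Z \<ge> 0" using n_ge_2 by (simp add: Z_def)
  have scale: "sqrt (real k * real dmin * real dmax * ln (real n)) = Z * mu ^ t"
    by (simp add: Z_def real_sqrt_mult sqrt_dmin ac_simps)
  have "(2::real) ^ 2 \<le> 2 ^ (t - 1)" using assms(1) by (intro power_increasing) auto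
  then have "sqrt 4 \<le> \<rho>" unfolding \<rho>_def by (intro real_sqrt_le_mono) simp
  then have \<rho>: "\<rho> \<ge> 2" by simp
  have \<rho>L: "\<rho> ^ L \<le> mu ^ (t - 1)"
    unfolding \<rho>_def by (rule sqrt_two_power_power_le[OF L])
  have "(\<Sum>l<L. rademacher_avg k (increments l))
      \<le> (\<Sum>l<L. sqrt (increment_const t) * (Z * mu ^ t) * \<rho> ^ l)"
  proof (rule sum_mono)
    fix l
    show "rademacher_avg k (increments l) \<le> sqrt (increment_const t) * (Z * mu ^ t) * \<rho> ^ l"
      using rademacher_avg_increments_le[of l] increment_numeric_le[of l] scale
      by (simp add: \<rho>_def)
  qed
  also have "\<dots> = sqrt (increment_const t) * (Z * mu ^ t) * (\<Sum>l<L. \<rho> ^ l)"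
    by (simp add: sum_distrib_left)
  also have "\<dots> \<le> sqrt (increment_const t) * (Z * mu ^ t) * mu ^ (t - 1)"
    using geometric_sum_le[OF \<rho>, of L] \<rho>L Z0 mu_pos
    by (intro mult_left_mono) (auto simp: increment_const_def)
  also have "\<dots> = sqrt (increment_const t) * Z * mu ^ (t + (t - 1))"
    by (simp add: power_add)
  also have "t + (t - 1) = 2 * t - 1" using t_pos by simp
  finally show ?thesis by (simp add: Z_def)
qed

lemma last_level_le:
  assumes L: "2 ^ (L * t) \<le> dmin" "dmin < 2 ^ (Suc L * t)"
  shows "rademacher_avg k (last_level L)
    \<le> sqrt (2 * last_level_const t) * sqrt (real k * real dmax * ln (real n)) * mu ^ (2 * t - 1)"
proof -
  define Z where "Z = sqrt (real k * real dmax * ln (real n))"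
  have Z0: "Z \<ge> 0" using n_ge_2 by (simp add: Z_def)
  have "real dmin ^ 2 / 2 ^ L \<le> real dmin ^ 2 / (mu\<^sup>2 / 2)"
    using mu_square_less[OF L(2)] mu_pos by (intro divide_left_mono) (auto simp: field_simps)
  also have "\<dots> = 2 * (mu ^ (2 * t - 1))\<^sup>2"
  proof -
    have "mu * mu ^ (2 * t - 1) = mu ^ Suc (2 * t - 1)" by (simp only: power_Suc)
    also have "Suc (2 * t - 1) = 2 * t" using t_pos by simp
    finally have "real dmin ^ 2 = mu\<^sup>2 * (mu ^ (2 * t - 1))\<^sup>2"
      using mu_power_2t by (simp add: power_mult_distrib[symmetric])
    then show ?thesis using mu_pos by (simp add: field_simps)
  qed
  finally have "sqrt (real dmin ^ 2 / 2 ^ L) \<le> sqrt (2 * (mu ^ (2 * t - 1))\<^sup>2)"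
    by (rule real_sqrt_le_mono)
  also have "\<dots> = sqrt 2 * mu ^ (2 * t - 1)" using mu_pos by (simp add: real_sqrt_mult)
  finally have "sqrt (last_level_const t) * Z * sqrt (real dmin ^ 2 / 2 ^ L)
      \<le> sqrt (last_level_const t) * Z * (sqrt 2 * mu ^ (2 * t - 1))"
    using Z0 by (intro mult_left_mono) (auto simp: last_level_const_def)
  moreover have "rademacher_avg k (last_level L) \<le> sqrt (last_level_const t) * Z * sqrt (real dmin ^ 2 / 2 ^ L)"
    using rademacher_avg_last_level_le[of L] last_level_numeric_le[OF real_two_power_le_dmin[OF L(1)]]
    by (simp add: Z_def)
  ultimately show ?thesis by (simp add: Z_def real_sqrt_mult ac_simps)
qed

lemma exp_max_le:
  assumes "t \<ge> 3"
  shows "exp_max n t k A d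
    \<le> chaining_const t * sqrt (real k * real dmax * ln (real n)) * real dmin powr (1 - 1 / (2 * real t))"
proof -
  obtain L where L: "2 ^ (L * t) \<le> dmin" "dmin < 2 ^ (Suc L * t)"
    using exists_power_bracket[OF dmin_ge_1, of t] t_pos by (auto simp: Suc_le_eq)
  have "exp_max n t k A d \<le> (\<Sum>l<L. rademacher_avg k (increments l)) + rademacher_avg k (last_level L)"
    by (rule exp_max_le_chain)
  also have "\<dots> \<le> chaining_const t * sqrt (real k * real dmax * ln (real n)) * mu ^ (2 * t - 1)"
    using sum_increments_le[OF assms L(1)] last_level_le[OF L] by (simp add: chaining_const_def algebra_simps)
  also have "mu ^ (2 * t - 1) = real dmin powr (1 - 1 / (2 * real t))"
    using mu_power[of 1] t_pos by simp
  finally show ?thesis .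
qed

end

lemma exp_max_no_forms: "exp_max n t 0 A d = 0"
proof -
  have "(\<lambda>X. 0::real) ` H_tuples n t d = {0}" using H_tuples_nonempty[of n t d] by auto
  then show ?thesis by (simp add: exp_max_def)
qed

theorem lemma4p5:
  fixes t :: nat
  assumes "t \<ge> 3"
  shows "\<exists>C::real. C > 0 \<and>
    (\<forall>n k (A :: nat \<Rightarrow> (nat \<Rightarrow> nat) \<Rightarrow> real) (d :: nat \<Rightarrow> nat).
       n \<ge> 2 \<longrightarrow> (\<forall>i<k. A i \<in> Pi_forms n t) \<longrightarrow> (\<forall>s<t. d s \<in> {1..n}) \<longrightarrow>
       exp_max n t k A d
         \<le> C * sqrt (real k * real (Max (d ` {..<t})) * ln (real n))
             * real (Min (d ` {..<t})) powr (1 - 1 / (2 * real t)))"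
proof (intro exI[of _ "chaining_const t"] conjI allI impI)
  show "chaining_const t > 0" using assms by (intro chaining_const_pos) simp
  fix n k and A :: "nat \<Rightarrow> (nat \<Rightarrow> nat) \<Rightarrow> real" and d :: "nat \<Rightarrow> nat"
  assume n: "n \<ge> 2" and A: "\<forall>i<k. A i \<in> Pi_forms n t" and d: "\<forall>s<t. d s \<in> {1..n}"
  show "exp_max n t k A d
      \<le> chaining_const t * sqrt (real k * real (Max (d ` {..<t})) * ln (real n))
        * real (Min (d ` {..<t})) powr (1 - 1 / (2 * real t))"
  proof (cases "k = 0")
    case True
    then show ?thesis by (simp add: exp_max_no_forms)
  next
    case False
    interpret chaining_setup n t k A d
      using n assms False A d by unfold_locales auto
    show ?thesis using exp_max_le[OF assms] by (simp add: dmax_def dmin_def)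
  qed
qed

end
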